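(* Let $M$ be the sub-extreme Kerr spacetime with mass $M_0$ and rotation parameter $a$, $0<a<M_0$, in advanced coordinates $(v,r,\theta,\varphi)$: $$ds^2=-\Big(1-\frac{2M_0r}{\rho^2}\Big)dv^2+\rho^2d\theta^2+\Big[r^2+a^2+\frac{2M_0ra^2\sin^2\theta}{\rho^2}\Big]\sin^2\theta\,d\varphi^2-\frac{4M_0ar\sin^2\theta}{\rho^2}dv\,d\varphi+2\,dv\,dr-2a\sin^2\theta\,dr\,d\varphi,$$ $\rho^2=r^2+a^2\cos^2\theta$, with time orientation such that $-\partial_r$ is future-directed. Let $r_\pm=M_0\pm\sqrt{M_0^2-a^2}$ and $$X=\Big\{(v,r,\theta,\varphi):\ r_-<r<r_+,\ 0<\theta<\pi,\ \cot\theta>\frac{M_0-r}{\sqrt{2M_0r-a^2-r^2}}\Big\}.$$ Then no closed trapped surface and no closed marginally trapped surface is contained in $X$.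
   Context: A surface is a spacelike embedded submanifold $S$ of codimension two. With future-directed null normal fields $\ell^a,\mathcal k^a$ on $S$ normalized by $\mathcal k^a\ell_a=-1$, set $\Theta^S_\ell=h^{ij}e_i^ae_j^b\nabla_a\ell_b$ (with $\{e_i\}$ a basis of $T_qS$ and $h^{ij}$ the inverse of the induced metric components) and likewise $\Theta^S_{\mathcal k}$. A closed trapped (resp. marginally trapped) surface is a compact surface without boundary with $\Theta^S_\ell<0,\Theta^S_{\mathcal k}<0$ (resp. both $\le0$) at every point. *)

theory Defs
  imports "HOL-Analysis.Analysis"
begin

(* Points of the (phi-unwrapped) advanced Kerr chart: p $ 1 = v, p $ 2 = r,
   p $ 3 = theta, p $ 4 = phi  (note: in type 4 the numeral 4 is the fourth index). *)

definition kerr_rho2 :: "real \<Rightarrow> real^4 \<Rightarrow> real" where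
  "kerr_rho2 a p = (p$2)^2 + a^2 * (cos (p$3))^2"

definition kerr_g :: "real \<Rightarrow> real \<Rightarrow> real^4 \<Rightarrow> real^4 \<Rightarrow> real^4 \<Rightarrow> real" where
  "kerr_g M0 a p u w =
    (let r = p$2; th = p$3; rho2 = kerr_rho2 a p; ssq = (sin th)^2 in
      - (1 - 2*M0*r/rho2) * (u$1) * (w$1)
      + rho2 * (u$3) * (w$3)
      + (r^2 + a^2 + 2*M0*r*a^2* ssq/rho2) * ssq * (u$4) * (w$4)
      - (2*M0*a*r* ssq/rho2) * ((u$1)*(w$4) + (u$4)*(w$1))
      + ((u$1)*(w$2) + (u$2)*(w$1))
      - a* ssq * ((u$2)*(w$4) + (u$4)*(w$2)))"

definition kerr_comp :: "real \<Rightarrow> real \<Rightarrow> real^4 \<Rightarrow> 4 \<Rightarrow> 4 \<Rightarrow> real" where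
  "kerr_comp M0 a p i j = kerr_g M0 a p (axis i 1) (axis j 1)"

definition pdiff :: "4 \<Rightarrow> (real^4 \<Rightarrow> real) \<Rightarrow> real^4 \<Rightarrow> real" where
  "pdiff k F p = deriv (\<lambda>t. F (p + t *\<^sub>R axis k 1)) 0"

definition kerr_christ :: "real \<Rightarrow> real \<Rightarrow> real^4 \<Rightarrow> 4 \<Rightarrow> 4 \<Rightarrow> 4 \<Rightarrow> real" where
  "kerr_christ M0 a p c i j =
     (pdiff i (\<lambda>q. kerr_comp M0 a q c j) p + pdiff j (\<lambda>q. kerr_comp M0 a q c i) p
      - pdiff c (\<lambda>q. kerr_comp M0 a q i j) p) / 2"

(* g(Y, nabla_X l), where dX = derivative of the components of l along X, L = l at p *)
definition kerr_B :: "real \<Rightarrow> real \<Rightarrow> real^4 \<Rightarrow> real^4 \<Rightarrow> real^4 \<Rightarrow> real^4 \<Rightarrow> real^4 \<Rightarrow> real" where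
  "kerr_B M0 a p X Y dX L =
     kerr_g M0 a p Y dX
     + (\<Sum>c\<in>UNIV. \<Sum>i\<in>UNIV. \<Sum>j\<in>UNIV. kerr_christ M0 a p c i j * (Y$c) * (X$i) * (L$j))"

fun Ck :: "nat \<Rightarrow> 'a::real_normed_vector set \<Rightarrow> ('a \<Rightarrow> 'b::real_normed_vector) \<Rightarrow> bool" where
  "Ck 0 U f = continuous_on U f"
| "Ck (Suc n) U f = (\<exists>f'. (\<forall>x\<in>U. (f has_derivative f' x) (at x)) \<and> (\<forall>v. Ck n U (\<lambda>x. f' x v)))"

definition smooth_on :: "'a::real_normed_vector set \<Rightarrow> ('a \<Rightarrow> 'b::real_normed_vector) \<Rightarrow> bool" where
  "smooth_on U f \<longleftrightarrow> (\<forall>n. Ck n U f)"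

definition surface_chart :: "(real^4) set \<Rightarrow> (real \<times> real \<Rightarrow> real^4) \<Rightarrow> (real \<times> real) set \<Rightarrow> (real^4) set \<Rightarrow> bool" where
  "surface_chart S f U W \<longleftrightarrow> open U \<and> open W \<and> smooth_on U f
     \<and> (\<forall>u\<in>U. inj (frechet_derivative f (at u)))
     \<and> (\<exists>g. homeomorphism U (S \<inter> W) f g)"

definition embedded_surface :: "(real^4) set \<Rightarrow> bool" where
  "embedded_surface S \<longleftrightarrow> (\<forall>p\<in>S. \<exists>f U W. surface_chart S f U W \<and> p \<in> W)"

definition ch_e1 :: "(real \<times> real \<Rightarrow> real^4) \<Rightarrow> real \<times> real \<Rightarrow> real^4" where
  "ch_e1 f u = frechet_derivative f (at u) (1, 0)"
definition ch_e2 :: "(real \<times> real \<Rightarrow> real^4) \<Rightarrow> real \<times> real \<Rightarrow> real^4" where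
  "ch_e2 f u = frechet_derivative f (at u) (0, 1)"

definition spacelike_surface :: "real \<Rightarrow> real \<Rightarrow> (real^4) set \<Rightarrow> bool" where
  "spacelike_surface M0 a S \<longleftrightarrow> (\<forall>f U W u. surface_chart S f U W \<and> u \<in> U \<longrightarrow>
     (let p = f u; e1 = ch_e1 f u; e2 = ch_e2 f u;
          h11 = kerr_g M0 a p e1 e1; h12 = kerr_g M0 a p e1 e2; h22 = kerr_g M0 a p e2 e2
      in h11 > 0 \<and> h11 * h22 - h12^2 > 0))"

definition phi_shift :: "real^4 \<Rightarrow> real^4" where
  "phi_shift p = p + (2*pi) *\<^sub>R axis 4 1"

(* compact surface without boundary in the spacetime (phi periodic), represented
   by its phi-periodic lift S to the (v,r,theta,phi) chart *)
definition closed_surface :: "real \<Rightarrow> real \<Rightarrow> (real^4) set \<Rightarrow> bool" where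
  "closed_surface M0 a S \<longleftrightarrow> S \<noteq> {} \<and> embedded_surface S \<and> spacelike_surface M0 a S
     \<and> (\<forall>p. p \<in> S \<longleftrightarrow> phi_shift p \<in> S)
     \<and> compact (S \<inter> {p. 0 \<le> p$4 \<and> p$4 \<le> 2*pi})"

(* future-directed null vector; -d_r is future-directed (and null) *)
definition future_null :: "real \<Rightarrow> real \<Rightarrow> real^4 \<Rightarrow> real^4 \<Rightarrow> bool" where
  "future_null M0 a p w \<longleftrightarrow> w \<noteq> 0 \<and> kerr_g M0 a p w w = 0 \<and>
     (kerr_g M0 a p w (- axis 2 1) < 0 \<or> (\<exists>c>0. w = c *\<^sub>R (- axis 2 1)))"

definition null_normal_pair :: "real \<Rightarrow> real \<Rightarrow> (real^4) set \<Rightarrow> (real^4 \<Rightarrow> real^4) \<Rightarrow> (real^4 \<Rightarrow> real^4) \<Rightarrow> bool" where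
  "null_normal_pair M0 a S l k \<longleftrightarrow>
     (\<forall>f U W. surface_chart S f U W \<longrightarrow>
        smooth_on U (l \<circ> f) \<and> smooth_on U (k \<circ> f) \<and>
        (\<forall>u\<in>U. \<forall>w. kerr_g M0 a (f u) (l (f u)) (frechet_derivative f (at u) w) = 0
                  \<and> kerr_g M0 a (f u) (k (f u)) (frechet_derivative f (at u) w) = 0))
     \<and> (\<forall>p\<in>S. future_null M0 a p (l p) \<and> future_null M0 a p (k p)
              \<and> kerr_g M0 a p (k p) (l p) = -1
              \<and> l (phi_shift p) = l p \<and> k (phi_shift p) = k p)"

(* expansion Theta_l = h^{ij} e_i^a e_j^b nabla_a l_b at the point f u *)
definition expansion :: "real \<Rightarrow> real \<Rightarrow> (real^4 \<Rightarrow> real^4) \<Rightarrow> (real \<times> real \<Rightarrow> real^4) \<Rightarrow> real \<times> real \<Rightarrow> real" where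
  "expansion M0 a l f u =
     (let p = f u; e1 = ch_e1 f u; e2 = ch_e2 f u;
          d1 = frechet_derivative (l \<circ> f) (at u) (1, 0);
          d2 = frechet_derivative (l \<circ> f) (at u) (0, 1);
          L = l p;
          h11 = kerr_g M0 a p e1 e1; h12 = kerr_g M0 a p e1 e2; h22 = kerr_g M0 a p e2 e2;
          dt = h11 * h22 - h12^2;
          B11 = kerr_B M0 a p e1 e1 d1 L; B12 = kerr_B M0 a p e1 e2 d1 L;
          B21 = kerr_B M0 a p e2 e1 d2 L; B22 = kerr_B M0 a p e2 e2 d2 L
      in (h22 * B11 - h12 * (B12 + B21) + h11 * B22) / dt)"

definition closed_trapped_surface :: "real \<Rightarrow> real \<Rightarrow> (real^4) set \<Rightarrow> bool" where
  "closed_trapped_surface M0 a S \<longleftrightarrow> closed_surface M0 a S \<and>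
     (\<exists>l k. null_normal_pair M0 a S l k \<and>
        (\<forall>f U W u. surface_chart S f U W \<and> u \<in> U \<longrightarrow>
           expansion M0 a l f u < 0 \<and> expansion M0 a k f u < 0))"

definition closed_marginally_trapped_surface :: "real \<Rightarrow> real \<Rightarrow> (real^4) set \<Rightarrow> bool" where
  "closed_marginally_trapped_surface M0 a S \<longleftrightarrow> closed_surface M0 a S \<and>
     (\<exists>l k. null_normal_pair M0 a S l k \<and>
        (\<forall>f U W u. surface_chart S f U W \<and> u \<in> U \<longrightarrow>
           expansion M0 a l f u \<le> 0 \<and> expansion M0 a k f u \<le> 0))"

definition r_plus :: "real \<Rightarrow> real \<Rightarrow> real" where
  "r_plus M0 a = M0 + sqrt (M0^2 - a^2)"
definition r_minus :: "real \<Rightarrow> real \<Rightarrow> real" where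
  "r_minus M0 a = M0 - sqrt (M0^2 - a^2)"

definition region_X :: "real \<Rightarrow> real \<Rightarrow> (real^4) set" where
  "region_X M0 a = {p. r_minus M0 a < p$2 \<and> p$2 < r_plus M0 a \<and> 0 < p$3 \<and> p$3 < pi
      \<and> cot (p$3) > (M0 - p$2) / sqrt (2*M0*(p$2) - a^2 - (p$2)^2)}"

end

theory Submission
  imports Defs
begin

(* In the region r_- < r < r_+ the function
     F = \<theta> + arcsin ((r - M0) / sqrt (M0^2 - a^2))
   has a null gradient n whose components do not depend on v and \<phi>, and dF \<le> 0 on future null
   vectors. At a point q where F attains its maximum on a closed surface S, dF vanishes on T_qS,
   so n is normal to S and n = \<alpha> l + \<beta> k with \<alpha> = - dF(k) \<ge> 0 and \<beta> = - dF(l) \<ge> 0.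
   The second order condition makes the trace of the Hessian of F along S nonpositive.
   Differentiating g(l, e_j) = 0 and g(k, e_j) = 0 along S shows that this trace equals
   - \<alpha> \<Theta>_l - \<beta> \<Theta>_k plus the trace over T_qS of the covariant Hessian of F.
   Because \<partial>_v and \<partial>_\<phi> are Killing and n is null, the latter only sees the derivative along n
   of the (v,\<phi>)-block of the metric, whose determinant is -\<Delta> sin\<^sup>2\<theta>; its trace is a positive
   multiple of n(-\<Delta> sin\<^sup>2\<theta>), which is positive exactly when
   cot \<theta> > (M0 - r) / sqrt (2 M0 r - a^2 - r^2). So \<Theta>_l \<le> 0 and \<Theta>_k \<le> 0 cannot both hold. *)

lemma has_derivative_vec_nth [derivative_intros]:
  "((\<lambda>x::real^'n. x $ i) has_derivative (\<lambda>h. h $ i)) F"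
  by (rule bounded_linear_imp_has_derivative[OF bounded_linear_vec_nth])

lemma has_derivative_zero_if_constant_along:
  assumes "(F has_derivative D) (at p)" and "\<And>t. F (p + t *\<^sub>R v) = F p"
  shows "D v = 0"
proof -
  have "((\<lambda>t::real. p + t *\<^sub>R v) has_derivative (\<lambda>t. t *\<^sub>R v)) (at 0)"
    by (intro derivative_eq_intros) auto
  moreover have "(F has_derivative D) (at ((\<lambda>t::real. p + t *\<^sub>R v) 0))" using assms by simp
  ultimately have "((\<lambda>t. F (p + t *\<^sub>R v)) has_derivative (\<lambda>t. D (t *\<^sub>R v))) (at 0)"
    by (rule has_derivative_compose)
  then have "((\<lambda>t. F p) has_derivative (\<lambda>t. D (t *\<^sub>R v))) (at (0::real))" using assms(2) by simp
  then have "(\<lambda>t. D (t *\<^sub>R v)) = (\<lambda>t. 0)"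
    using has_derivative_unique has_derivative_const by blast
  then show ?thesis by (metis scaleR_one)
qed

lemma has_derivative_locally_constant:
  assumes "(F has_derivative D) (at p)" and "open S" "p \<in> S" and "\<And>y. y \<in> S \<Longrightarrow> F y = F p"
  shows "D = (\<lambda>x. 0)"
proof -
  have "(F has_derivative (\<lambda>x. 0)) (at p)"
    by (rule has_derivative_transform_within_open[OF has_derivative_const assms(2,3)])
      (use assms(4) in auto)
  then show ?thesis using assms(1) has_derivative_unique by blast
qed

lemma pdiff_eq_derivative:
  assumes "(F has_derivative F') (at p)"
  shows "pdiff k F p = F' (axis k 1)"
proof -
  have "((\<lambda>t::real. p + t *\<^sub>R axis k 1) has_derivative (\<lambda>t. t *\<^sub>R axis k 1)) (at 0)"
    by (intro derivative_eq_intros) auto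
  moreover have "(F has_derivative F') (at ((\<lambda>t::real. p + t *\<^sub>R axis k 1) 0))" using assms by simp
  ultimately have "((\<lambda>t. F (p + t *\<^sub>R axis k 1)) has_derivative (\<lambda>t. F' (t *\<^sub>R axis k 1))) (at 0)"
    by (rule has_derivative_compose)
  moreover have "(\<lambda>t. F' (t *\<^sub>R axis k (1::real))) = (\<lambda>t. F' (axis k 1) * t)"
    using has_derivative_linear[OF assms] by (simp add: linear_scale mult.commute)
  ultimately have "((\<lambda>t. F (p + t *\<^sub>R axis k 1)) has_real_derivative F' (axis k 1)) (at 0)"
    unfolding has_field_derivative_def by (metis (no_types, lifting) ext mult.commute)
  then show ?thesis unfolding pdiff_def by (rule DERIV_imp_deriv)
qed

lemma derivative_linear_in_parameter:
  fixes D :: "'a::real_normed_vector \<Rightarrow> 'b::real_vector \<Rightarrow> 'c::real_normed_vector"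
  assumes U: "open U" "u0 \<in> U" and lin: "\<And>u. u \<in> U \<Longrightarrow> linear (D u)"
    and D': "\<And>v u. u \<in> U \<Longrightarrow> ((\<lambda>x. D x v) has_derivative D' v u) (at u)"
  shows "linear (\<lambda>v. D' v u0 h)"
proof (rule linearI)
  fix v w :: 'b and c :: real
  have "((\<lambda>x. D x v + D x w) has_derivative (\<lambda>h. D' v u0 h + D' w u0 h)) (at u0)"
    by (intro has_derivative_add D' U(2))
  then have "((\<lambda>x. D x (v + w)) has_derivative (\<lambda>h. D' v u0 h + D' w u0 h)) (at u0)"
    by (rule has_derivative_transform_within_open[OF _ U]) (simp add: lin linear_add)
  from has_derivative_unique[OF D'[OF U(2)] this]
  show "D' (v + w) u0 h = D' v u0 h + D' w u0 h" by meson
  have "((\<lambda>x. c *\<^sub>R D x v) has_derivative (\<lambda>h. c *\<^sub>R D' v u0 h)) (at u0)"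
    by (intro has_derivative_scaleR_right D' U(2))
  then have "((\<lambda>x. D x (c *\<^sub>R v)) has_derivative (\<lambda>h. c *\<^sub>R D' v u0 h)) (at u0)"
    by (rule has_derivative_transform_within_open[OF _ U]) (simp add: lin linear_scale)
  from has_derivative_unique[OF D'[OF U(2)] this]
  show "D' (c *\<^sub>R v) u0 h = c *\<^sub>R D' v u0 h" by meson
qed

lemma kerr_g_sum:
  "kerr_g M0 a p u w = (\<Sum>i\<in>UNIV. \<Sum>j\<in>UNIV. kerr_comp M0 a p i j * u$i * w$j)"
  by (simp add: sum_4 kerr_comp_def kerr_g_def axis_def Let_def algebra_simps)

lemma kerr_g_commute: "kerr_g M0 a p u w = kerr_g M0 a p w u"
  by (simp add: kerr_g_def Let_def algebra_simps)

lemma kerr_comp_commute: "kerr_comp M0 a p i j = kerr_comp M0 a p j i"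
  by (simp add: kerr_comp_def kerr_g_commute)

lemma kerr_g_bilinear:
  "kerr_g M0 a p (x + y) w = kerr_g M0 a p x w + kerr_g M0 a p y w"
  "kerr_g M0 a p (c *\<^sub>R x) w = c * kerr_g M0 a p x w"
  "kerr_g M0 a p x (y + z) = kerr_g M0 a p x y + kerr_g M0 a p x z"
  "kerr_g M0 a p x (c *\<^sub>R y) = c * kerr_g M0 a p x y"
  "kerr_g M0 a p (x - y) w = kerr_g M0 a p x w - kerr_g M0 a p y w"
  "kerr_g M0 a p 0 w = 0"
  "kerr_g M0 a p x 0 = 0"
  by (simp_all add: kerr_g_sum sum_4 algebra_simps)

lemma kerr_g_cong: "p$2 = q$2 \<Longrightarrow> p$3 = q$3 \<Longrightarrow> kerr_g M0 a p u w = kerr_g M0 a q u w"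
  by (simp add: kerr_g_def kerr_rho2_def)

definition killing_plane :: "(real^4) set" where
  "killing_plane = {X. X$2 = 0 \<and> X$3 = 0}"

lemma killing_plane_decompose:
  "X \<in> killing_plane \<Longrightarrow> X = X$1 *\<^sub>R axis 1 1 + X$4 *\<^sub>R axis 4 1"
  by (simp add: killing_plane_def vec_eq_iff forall_4 axis_def)

lemma kerr_g_killing_plane:
  assumes "u \<in> killing_plane" "w \<in> killing_plane"
  shows "kerr_g M0 a p u w = u$1 * w$1 * kerr_comp M0 a p 1 1
     + (u$1 * w$4 + u$4 * w$1) * kerr_comp M0 a p 1 4 + u$4 * w$4 * kerr_comp M0 a p 4 4"
  using assms kerr_comp_commute[of M0 a p 4 1]
  by (simp add: killing_plane_def kerr_g_sum sum_4 algebra_simps)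

definition kerr_dcomp :: "real \<Rightarrow> real \<Rightarrow> real^4 \<Rightarrow> real^4 \<Rightarrow> 4 \<Rightarrow> 4 \<Rightarrow> real" where
  "kerr_dcomp M0 a p X i j = frechet_derivative (\<lambda>q. kerr_comp M0 a q i j) (at p) X"

definition kerr_dg :: "real \<Rightarrow> real \<Rightarrow> real^4 \<Rightarrow> real^4 \<Rightarrow> real^4 \<Rightarrow> real^4 \<Rightarrow> real" where
  "kerr_dg M0 a p X u w = (\<Sum>i\<in>UNIV. \<Sum>j\<in>UNIV. kerr_dcomp M0 a p X i j * u$i * w$j)"

lemma kerr_comp_has_derivative:
  assumes "kerr_rho2 a p \<noteq> 0"
  shows "((\<lambda>q. kerr_comp M0 a q i j) has_derivative (\<lambda>X. kerr_dcomp M0 a p X i j)) (at p)"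
proof -
  have "(\<lambda>q. kerr_comp M0 a q i j) differentiable (at p)"
    unfolding differentiable_def kerr_comp_def kerr_g_def Let_def kerr_rho2_def
    by (rule exI) (rule derivative_intros | use assms in \<open>simp add: kerr_rho2_def\<close>)+
  then show ?thesis
    unfolding kerr_dcomp_def by (simp add: frechet_derivative_works)
qed

lemma pdiff_kerr_comp:
  assumes "kerr_rho2 a p \<noteq> 0"
  shows "pdiff k (\<lambda>q. kerr_comp M0 a q i j) p = kerr_dcomp M0 a p (axis k 1) i j"
  using pdiff_eq_derivative[OF kerr_comp_has_derivative[OF assms]] .

lemma kerr_dcomp_expand:
  assumes "kerr_rho2 a p \<noteq> 0"
  shows "kerr_dcomp M0 a p X i j = (\<Sum>k\<in>UNIV. X$k * kerr_dcomp M0 a p (axis k 1) i j)"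
proof -
  have lin: "linear (\<lambda>X. kerr_dcomp M0 a p X i j)"
    using kerr_comp_has_derivative[OF assms] has_derivative_linear by blast
  have "X = (\<Sum>k\<in>UNIV. X$k *\<^sub>R axis k 1)"
    by (simp add: vec_eq_iff forall_4 sum_4 axis_def)
  then have "kerr_dcomp M0 a p X i j = kerr_dcomp M0 a p (\<Sum>k\<in>UNIV. X$k *\<^sub>R axis k 1) i j" by simp
  also have "\<dots> = (\<Sum>k\<in>UNIV. X$k * kerr_dcomp M0 a p (axis k 1) i j)"
    by (simp add: linear_sum[OF lin] linear_scale[OF lin])
  finally show ?thesis .
qed

lemma kerr_dcomp_commute: "kerr_dcomp M0 a p X i j = kerr_dcomp M0 a p X j i"
  unfolding kerr_dcomp_def by (subst kerr_comp_commute) simp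

lemma kerr_dcomp_killing:
  assumes "kerr_rho2 a p \<noteq> 0" and "k = 1 \<or> k = 4"
  shows "kerr_dcomp M0 a p (axis k 1) i j = 0"
proof (rule has_derivative_zero_if_constant_along[OF kerr_comp_has_derivative[OF assms(1)]])
  show "kerr_comp M0 a (p + t *\<^sub>R axis k 1) i j = kerr_comp M0 a p i j" for t
    using assms(2) unfolding kerr_comp_def by (intro kerr_g_cong) (auto simp: axis_def)
qed

lemma kerr_g_has_derivative:
  fixes P U W :: "'a::real_normed_vector \<Rightarrow> real^4"
  assumes r: "kerr_rho2 a (P x) \<noteq> 0" and dP: "(P has_derivative DP) (at x)"
    and dU: "(U has_derivative DU) (at x)" and dW: "(W has_derivative DW) (at x)"
  shows "((\<lambda>y. kerr_g M0 a (P y) (U y) (W y)) has_derivative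
     (\<lambda>h. kerr_dg M0 a (P x) (DP h) (U x) (W x) + kerr_g M0 a (P x) (DU h) (W x)
          + kerr_g M0 a (P x) (U x) (DW h))) (at x)"
proof -
  have "((\<lambda>y. \<Sum>i\<in>UNIV. \<Sum>j\<in>UNIV. kerr_comp M0 a (P y) i j * U y$i * W y$j) has_derivative
     (\<lambda>h. \<Sum>i\<in>UNIV. \<Sum>j\<in>UNIV. (kerr_comp M0 a (P x) i j * U x$i * DW h$j +
          (kerr_comp M0 a (P x) i j * DU h$i + kerr_dcomp M0 a (P x) (DP h) i j * U x$i) * W x$j))) (at x)"
    by (intro has_derivative_sum has_derivative_mult
        has_derivative_compose[OF dP kerr_comp_has_derivative[OF r]]
        has_derivative_compose[OF dU has_derivative_vec_nth]
        has_derivative_compose[OF dW has_derivative_vec_nth])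
  then show ?thesis
    by (simp add: kerr_g_sum[abs_def] kerr_dg_def algebra_simps sum.distrib)
qed

lemma kerr_B_eq:
  assumes "kerr_rho2 a p \<noteq> 0"
  shows "kerr_B M0 a p X Y dX L = kerr_g M0 a p Y dX
     + (kerr_dg M0 a p X Y L + kerr_dg M0 a p L Y X - kerr_dg M0 a p Y X L) / 2"
  unfolding kerr_B_def kerr_christ_def pdiff_kerr_comp[OF assms] kerr_dg_def
    kerr_dcomp_expand[OF assms, of M0 X] kerr_dcomp_expand[OF assms, of M0 Y]
    kerr_dcomp_expand[OF assms, of M0 L]
  by (simp add: sum_4 algebra_simps add_divide_distrib diff_divide_distrib)

lemma kerr_dg_commute: "kerr_dg M0 a p X u w = kerr_dg M0 a p X w u"
  unfolding kerr_dg_def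
  by (subst sum.swap) (simp add: kerr_dcomp_commute mult.commute mult.left_commute)

lemma kerr_dg_expand:
  assumes "kerr_rho2 a p \<noteq> 0"
  shows "kerr_dg M0 a p X u w = (\<Sum>k\<in>UNIV. X$k * kerr_dg M0 a p (axis k 1) u w)"
  unfolding kerr_dg_def kerr_dcomp_expand[OF assms, of M0 X]
  by (simp add: sum_4 algebra_simps)

lemma kerr_dg_bilinear:
  "kerr_dg M0 a p X (x + y) w = kerr_dg M0 a p X x w + kerr_dg M0 a p X y w"
  "kerr_dg M0 a p X (c *\<^sub>R x) w = c * kerr_dg M0 a p X x w"
  "kerr_dg M0 a p X x (y + z) = kerr_dg M0 a p X x y + kerr_dg M0 a p X x z"
  "kerr_dg M0 a p X x (c *\<^sub>R y) = c * kerr_dg M0 a p X x y"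
  unfolding kerr_dg_def by (simp_all add: sum_4 algebra_simps)

lemma kerr_dg_linear_direction:
  assumes "kerr_rho2 a p \<noteq> 0"
  shows "kerr_dg M0 a p (X + Y) u w = kerr_dg M0 a p X u w + kerr_dg M0 a p Y u w"
    and "kerr_dg M0 a p (c *\<^sub>R X) u w = c * kerr_dg M0 a p X u w"
  unfolding kerr_dg_expand[OF assms, where X="X+Y"] kerr_dg_expand[OF assms, where X="c *\<^sub>R X"]
    kerr_dg_expand[OF assms, where X=X] kerr_dg_expand[OF assms, where X=Y]
  by (simp_all add: sum_4 algebra_simps)

lemma kerr_dg_killing_direction:
  assumes "kerr_rho2 a p \<noteq> 0" and "X \<in> killing_plane"
  shows "kerr_dg M0 a p X u w = 0"
proof -
  have "kerr_dg M0 a p (axis k 1) u w = 0" if "k = 1 \<or> k = 4" for k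
    unfolding kerr_dg_def using kerr_dcomp_killing[OF assms(1) that] by simp
  then show ?thesis
    using assms(2) by (simp add: kerr_dg_expand[OF assms(1), where X=X] killing_plane_def sum_4)
qed

lemma kerr_dg_killing_plane:
  assumes "u \<in> killing_plane" "w \<in> killing_plane"
  shows "kerr_dg M0 a p X u w = u$1 * w$1 * kerr_dcomp M0 a p X 1 1
     + (u$1 * w$4 + u$4 * w$1) * kerr_dcomp M0 a p X 1 4 + u$4 * w$4 * kerr_dcomp M0 a p X 4 4"
  using assms kerr_dcomp_commute[of M0 a p X 4 1]
  by (simp add: killing_plane_def kerr_dg_def sum_4 algebra_simps)

(* -\<Delta> = 2 M0 r - a^2 - r^2 is positive strictly between the horizons *)
definition sqrt_neg_Delta :: "real \<Rightarrow> real \<Rightarrow> real \<Rightarrow> real" where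
  "sqrt_neg_Delta M0 a r = sqrt (2*M0*r - a^2 - r^2)"

lemma sqrt_neg_Delta_sq:
  assumes "0 < sqrt_neg_Delta M0 a r"
  shows "(sqrt_neg_Delta M0 a r)^2 = 2*M0*r - a^2 - r^2"
proof -
  have "2*M0*r - a^2 - r^2 \<ge> 0"
    by (rule ccontr) (use assms in \<open>simp add: sqrt_neg_Delta_def\<close>)
  then show ?thesis by (simp add: sqrt_neg_Delta_def)
qed

definition between_horizons :: "real \<Rightarrow> real \<Rightarrow> (real^4) set" where
  "between_horizons M0 a = {p. r_minus M0 a < p$2 \<and> p$2 < r_plus M0 a}"

lemma open_between_horizons: "open (between_horizons M0 a)"
  unfolding between_horizons_def by (intro open_Collect_conj open_Collect_less continuous_intros)

lemma region_X_subset_between_horizons: "region_X M0 a \<subseteq> between_horizons M0 a"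
  unfolding region_X_def between_horizons_def by auto

lemma between_horizonsD:
  assumes "0 < a" "a < M0" and "p \<in> between_horizons M0 a"
  shows "0 < sqrt_neg_Delta M0 a (p$2)" "0 < kerr_rho2 a p" "\<bar>p$2 - M0\<bar> < sqrt (M0^2 - a^2)"
proof -
  have d: "0 < M0^2 - a^2" using assms(1,2) by (simp add: power_strict_mono)
  have "sqrt (M0^2 - a^2) < sqrt (M0^2)"
    using assms(1) by (intro real_sqrt_less_mono) simp
  then have dl: "sqrt (M0^2 - a^2) < M0" using assms(1,2) by simp
  have r: "M0 - sqrt (M0^2 - a^2) < p$2" "p$2 < M0 + sqrt (M0^2 - a^2)"
    using assms(3) by (auto simp: between_horizons_def r_minus_def r_plus_def)
  show ab: "\<bar>p$2 - M0\<bar> < sqrt (M0^2 - a^2)" using r by auto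
  have "0 < p$2" using r dl by simp
  then show "0 < kerr_rho2 a p" unfolding kerr_rho2_def by (simp add: add_pos_nonneg)
  have "\<bar>p$2 - M0\<bar>^2 < (sqrt (M0^2 - a^2))^2"
    by (rule power_strict_mono[OF ab]) auto
  then have "(p$2 - M0)^2 < M0^2 - a^2" using d by simp
  then have "0 < 2*M0*(p$2) - a^2 - (p$2)^2" by (simp add: power2_eq_square algebra_simps)
  then show "0 < sqrt_neg_Delta M0 a (p$2)" by (simp add: sqrt_neg_Delta_def)
qed

definition barrier :: "real \<Rightarrow> real \<Rightarrow> real^4 \<Rightarrow> real" where
  "barrier M0 a p = p$3 + arcsin ((p$2 - M0) / sqrt (M0^2 - a^2))"

definition barrier_diff :: "real \<Rightarrow> real \<Rightarrow> real^4 \<Rightarrow> real^4 \<Rightarrow> real" where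
  "barrier_diff M0 a p X = X$2 / sqrt_neg_Delta M0 a (p$2) + X$3"

definition barrier_grad :: "real \<Rightarrow> real \<Rightarrow> real^4 \<Rightarrow> real^4" where
  "barrier_grad M0 a p =
     (\<chi> i. if i = 1 then ((p$2)^2 + a^2) / (sqrt_neg_Delta M0 a (p$2) * kerr_rho2 a p)
       else if i = 2 then - sqrt_neg_Delta M0 a (p$2) / kerr_rho2 a p
       else if i = 3 then 1 / kerr_rho2 a p
       else a / (sqrt_neg_Delta M0 a (p$2) * kerr_rho2 a p))"

lemma barrier_grad_nth:
  "barrier_grad M0 a p $ 1 = ((p$2)^2 + a^2) / (sqrt_neg_Delta M0 a (p$2) * kerr_rho2 a p)"
  "barrier_grad M0 a p $ 2 = - sqrt_neg_Delta M0 a (p$2) / kerr_rho2 a p"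
  "barrier_grad M0 a p $ 3 = 1 / kerr_rho2 a p"
  "barrier_grad M0 a p $ 4 = a / (sqrt_neg_Delta M0 a (p$2) * kerr_rho2 a p)"
  by (simp_all add: barrier_grad_def)

lemma barrier_has_derivative:
  assumes r: "\<bar>p$2 - M0\<bar> < sqrt (M0^2 - a^2)"
  shows "(barrier M0 a has_derivative barrier_diff M0 a p) (at p)"
proof -
  define d where "d = sqrt (M0^2 - a^2)"
  have dp: "0 < d" using r unfolding d_def[symmetric] by (meson abs_ge_zero le_less_trans)
  then have d2: "d^2 = M0^2 - a^2" unfolding d_def by (simp add: real_sqrt_gt_0_iff)
  have x: "-1 < (p$2 - M0)/d" "(p$2 - M0)/d < 1"
    using r dp unfolding d_def[symmetric] by (auto simp: abs_less_iff field_simps)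
  have "((\<lambda>q. (q$2 - M0)/d) has_derivative (\<lambda>h. h$2/d)) (at p)"
    using dp by (auto intro!: derivative_eq_intros)
  from has_derivative_arcsin[OF x this]
  have "((\<lambda>q. q$3 + arcsin ((q$2 - M0) / d)) has_derivative
     (\<lambda>h. h$3 + h$2 / d * inverse (sqrt (1 - ((p$2 - M0)/d)^2)))) (at p)"
    by (intro has_derivative_add has_derivative_vec_nth)
  moreover have "(\<lambda>h. h$3 + h$2 / d * inverse (sqrt (1 - ((p$2 - M0)/d)^2))) = barrier_diff M0 a p"
  proof
    fix h :: "real^4"
    have "d * sqrt (1 - ((p$2 - M0)/d)^2) = sqrt (d^2 * (1 - ((p$2 - M0)/d)^2))"
      using dp by (simp add: real_sqrt_mult)
    also have "d^2 * (1 - ((p$2 - M0)/d)^2) = d^2 - (p$2 - M0)^2"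
      using dp by (simp add: power_divide field_simps)
    also have "\<dots> = 2*M0*(p$2) - a^2 - (p$2)^2"
      using d2 by (simp add: power2_eq_square algebra_simps)
    finally have "d * sqrt (1 - ((p$2 - M0)/d)^2) = sqrt_neg_Delta M0 a (p$2)"
      by (simp add: sqrt_neg_Delta_def)
    moreover have "h$2 / d * inverse (sqrt (1 - ((p$2 - M0)/d)^2))
        = h$2 / (d * sqrt (1 - ((p$2 - M0)/d)^2))"
      by (simp add: divide_inverse inverse_mult_distrib mult_ac)
    ultimately show "h$3 + h$2 / d * inverse (sqrt (1 - ((p$2 - M0)/d)^2)) = barrier_diff M0 a p h"
      unfolding barrier_diff_def by simp
  qed
  ultimately show ?thesis unfolding barrier_def d_def[symmetric] by simp
qed

lemma kerr_g_barrier_grad_coeffs: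
  fixes r s R sn c a M0 :: real
  assumes s2: "s^2 = 2*M0*r - a^2 - r^2" and sn: "sn^2 = 1 - c^2" and R: "R = r^2 + a^2*c^2"
    and "s \<noteq> 0" "R \<noteq> 0"
  shows "- (1 - 2*M0*r/R) * ((r^2+a^2)/(s*R)) - (2*M0*a*r * sn^2/R) * (a/(s*R)) - s/R = 0"
    and "(r^2+a^2)/(s*R) - a * sn^2*(a/(s*R)) = 1/s"
    and "(r^2 + a^2 + 2*M0*r*a^2 * sn^2/R) * sn^2 * (a/(s*R))
          - (2*M0*a*r * sn^2/R) * ((r^2+a^2)/(s*R)) - a * sn^2*(-s/R) = 0"
proof -
  have "- (1 - 2*M0*r/R) * ((r^2+a^2)/(s*R)) - (2*M0*a*r * sn^2/R) * (a/(s*R)) - s/R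
      = (-(R-2*M0*r)*(r^2+a^2) - 2*M0*a^2*r * sn^2 - s^2*R) / (s*R^2)"
    using assms(4,5) by (simp add: field_simps power2_eq_square)
  also have "-(R-2*M0*r)*(r^2+a^2) - 2*M0*a^2*r * sn^2 - s^2*R = 0" unfolding s2 sn R by algebra
  finally show "- (1 - 2*M0*r/R) * ((r^2+a^2)/(s*R)) - (2*M0*a*r * sn^2/R) * (a/(s*R)) - s/R = 0"
    by simp
  have "(r^2+a^2)/(s*R) - a * sn^2*(a/(s*R)) = (r^2+a^2 - a^2 * sn^2)/(s*R)"
    using assms(4,5) by (simp add: field_simps power2_eq_square)
  also have "r^2+a^2 - a^2 * sn^2 = R" unfolding sn R by algebra
  finally show "(r^2+a^2)/(s*R) - a * sn^2*(a/(s*R)) = 1/s" using assms(5) by simp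
  have "(r^2 + a^2 + 2*M0*r*a^2 * sn^2/R) * sn^2 * (a/(s*R))
          - (2*M0*a*r * sn^2/R) * ((r^2+a^2)/(s*R)) - a * sn^2*(-s/R)
      = ((R*(r^2+a^2) + 2*M0*r*a^2 * sn^2) * sn^2*a - 2*M0*a*r * sn^2*(r^2+a^2) + a * sn^2* s^2*R)
        / (s*R^2)"
    using assms(4,5) by (simp add: field_simps power2_eq_square)
  also have "(R*(r^2+a^2) + 2*M0*r*a^2 * sn^2) * sn^2*a - 2*M0*a*r * sn^2*(r^2+a^2)
      + a * sn^2* s^2*R = 0"
    unfolding s2 sn R by algebra
  finally show "(r^2 + a^2 + 2*M0*r*a^2 * sn^2/R) * sn^2 * (a/(s*R))
          - (2*M0*a*r * sn^2/R) * ((r^2+a^2)/(s*R)) - a * sn^2*(-s/R) = 0" by simp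
qed

lemma kerr_g_barrier_grad:
  assumes s: "0 < sqrt_neg_Delta M0 a (p$2)" and R: "0 < kerr_rho2 a p"
  shows "kerr_g M0 a p (barrier_grad M0 a p) X = barrier_diff M0 a p X"
proof -
  have lincomb: "- (1 - 2*M0*r/R) * ((r^2+a^2)/(s*R)) * X1 + R * (1/R) * X3
      + (r^2 + a^2 + 2*M0*r*a^2 * sn^2/R) * sn^2 * (a/(s*R)) * X4
      - (2*M0*a*r * sn^2/R) * (((r^2+a^2)/(s*R))*X4 + (a/(s*R))*X1)
      + (((r^2+a^2)/(s*R))*X2 + (-s/R)*X1) - a * sn^2 * ((-s/R)*X4 + (a/(s*R))*X2)
    = (- (1 - 2*M0*r/R) * ((r^2+a^2)/(s*R)) - (2*M0*a*r * sn^2/R) * (a/(s*R)) - s/R) * X1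
      + ((r^2+a^2)/(s*R) - a * sn^2*(a/(s*R))) * X2 + (R*(1/R)) * X3
      + ((r^2 + a^2 + 2*M0*r*a^2 * sn^2/R) * sn^2 * (a/(s*R)) - (2*M0*a*r * sn^2/R) * ((r^2+a^2)/(s*R))
         - a * sn^2*(-s/R)) * X4" for r s R sn X1 X2 X3 X4 :: real
    by (simp add: algebra_simps)
  have "sqrt_neg_Delta M0 a (p$2) \<noteq> 0" "kerr_rho2 a p \<noteq> 0" using s R by auto
  note C = kerr_g_barrier_grad_coeffs[OF sqrt_neg_Delta_sq[OF s] sin_squared_eq kerr_rho2_def this]
  show ?thesis
    unfolding kerr_g_def Let_def barrier_grad_nth barrier_diff_def lincomb C using R by simp
qed

lemma barrier_grad_null:
  assumes "0 < sqrt_neg_Delta M0 a (p$2)" "0 < kerr_rho2 a p"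
  shows "kerr_g M0 a p (barrier_grad M0 a p) (barrier_grad M0 a p) = 0"
  using assms by (simp add: kerr_g_barrier_grad barrier_diff_def barrier_grad_nth)

lemma barrier_grad_differentiable:
  assumes "0 < sqrt_neg_Delta M0 a (p$2)" and "0 < kerr_rho2 a p"
  shows "\<exists>D. (barrier_grad M0 a has_derivative D) (at p)"
proof -
  have eq: "barrier_grad M0 a q =
     (((q$2)^2 + a^2) / (sqrt (2*M0*(q$2) - a^2 - (q$2)^2) * ((q$2)^2 + a^2 * (cos (q$3))^2))) *\<^sub>R axis 1 1
   + (- sqrt (2*M0*(q$2) - a^2 - (q$2)^2) / ((q$2)^2 + a^2 * (cos (q$3))^2)) *\<^sub>R axis 2 1
   + (1 / ((q$2)^2 + a^2 * (cos (q$3))^2)) *\<^sub>R axis 3 1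
   + (a / (sqrt (2*M0*(q$2) - a^2 - (q$2)^2) * ((q$2)^2 + a^2 * (cos (q$3))^2))) *\<^sub>R axis 4 1" for q
    by (simp add: vec_eq_iff forall_4 barrier_grad_def axis_def sqrt_neg_Delta_def kerr_rho2_def)
  have pos: "0 < 2*M0*(p$2) - a^2 - (p$2)^2" "sqrt (2*M0*(p$2) - a^2 - (p$2)^2) \<noteq> 0"
      "(p$2)^2 + a^2 * (cos (p$3))^2 \<noteq> 0"
    using assms by (simp_all add: sqrt_neg_Delta_def kerr_rho2_def)
  show ?thesis
    unfolding eq[abs_def]
    by (rule exI) (rule derivative_intros | use pos in simp)+
qed

lemma barrier_grad_derivative_killing:
  assumes D: "(barrier_grad M0 a has_derivative D) (at p)" and X: "X \<in> killing_plane"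
  shows "D X = 0"
proof -
  have local: "barrier_grad M0 a x = barrier_grad M0 a y" if "x$2 = y$2" "x$3 = y$3" for x y
    by (simp only: barrier_grad_def kerr_rho2_def that)
  have zero: "D (axis k 1) = 0" if "k = 1 \<or> k = 4" for k
    by (rule has_derivative_zero_if_constant_along[OF D], rule local)
      (use that in \<open>auto simp: axis_def\<close>)
  have lin: "linear D" using D has_derivative_linear by blast
  have "D X = D (X$1 *\<^sub>R axis 1 1 + X$4 *\<^sub>R axis 4 1)"
    using killing_plane_decompose[OF X] by metis
  also have "\<dots> = X$1 *\<^sub>R D (axis 1 1) + X$4 *\<^sub>R D (axis 4 1)"
    using lin by (simp add: linear_add linear_scale)
  also have "\<dots> = 0" using zero by simp
  finally show ?thesis .
qed

lemma kerr_g_quadratic_form_identity: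
  fixes r s R sn c a M0 w1 w2 w3 w4 :: real
  assumes s2: "s^2 = 2*M0*r - a^2 - r^2" and sn: "sn^2 = 1 - c^2" and R: "R = r^2 + a^2*c^2"
    and "R \<noteq> 0"
  shows "- (1 - 2*M0*r/R) * w1 * w1 + R * w3 * w3 + (r^2 + a^2 + 2*M0*r*a^2 * sn^2/R) * sn^2 * w4 * w4
    - (2*M0*a*r * sn^2/R) * (w1 * w4 + w4 * w1) + (w1 * w2 + w2 * w1) - a * sn^2 * (w2 * w4 + w4 * w2)
    = (s^2/R) * (w1 - a * sn^2 * w4)^2 + 2 * (w1 - a * sn^2 * w4) * w2 + R * w3^2
      + (sn^2/R) * ((r^2+a^2) * w4 - a * w1)^2"
proof -
  have "(- (1 - 2*M0*r/R) * w1 * w1 + R * w3 * w3 + (r^2 + a^2 + 2*M0*r*a^2 * sn^2/R) * sn^2 * w4 * w4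
    - (2*M0*a*r * sn^2/R) * (w1 * w4 + w4 * w1) + (w1 * w2 + w2 * w1) - a * sn^2 * (w2 * w4 + w4 * w2))
    - ((s^2/R) * (w1 - a * sn^2 * w4)^2 + 2 * (w1 - a * sn^2 * w4) * w2 + R * w3^2
      + (sn^2/R) * ((r^2+a^2) * w4 - a * w1)^2)
    = (- (R - 2*M0*r) * w1 * w1 + R*R * w3 * w3 + (R*(r^2 + a^2) + 2*M0*r*a^2 * sn^2) * sn^2 * w4 * w4
    - (2*M0*a*r * sn^2) * (w1 * w4 + w4 * w1) + R*(w1 * w2 + w2 * w1) - R*a * sn^2 * (w2 * w4 + w4 * w2)
    - (s^2 * (w1 - a * sn^2 * w4)^2 + R*2 * (w1 - a * sn^2 * w4) * w2 + R*R * w3^2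
      + sn^2 * ((r^2+a^2) * w4 - a * w1)^2)) / R"
    using assms(4) by (simp add: field_simps power2_eq_square)
  also have "(- (R - 2*M0*r) * w1 * w1 + R*R * w3 * w3 + (R*(r^2 + a^2) + 2*M0*r*a^2 * sn^2) * sn^2 * w4 * w4
    - (2*M0*a*r * sn^2) * (w1 * w4 + w4 * w1) + R*(w1 * w2 + w2 * w1) - R*a * sn^2 * (w2 * w4 + w4 * w2)
    - (s^2 * (w1 - a * sn^2 * w4)^2 + R*2 * (w1 - a * sn^2 * w4) * w2 + R*R * w3^2
      + sn^2 * ((r^2+a^2) * w4 - a * w1)^2)) = 0"
    unfolding s2 R using sn by algebra
  finally show ?thesis by simp
qed

(* With P = - g(w, -\<partial>_r) > 0, completing the square in g(w,w) = 0 gives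
   2 \<rho>\<^sup>2 P (w$2 + s w$3) \<le> 0, where s = sqrt (-\<Delta>). *)
lemma future_null_barrier_diff_nonpos:
  assumes s: "0 < sqrt_neg_Delta M0 a (p$2)" and R: "0 < kerr_rho2 a p"
    and fn: "future_null M0 a p w"
  shows "barrier_diff M0 a p w \<le> 0"
proof (cases "kerr_g M0 a p w (- axis 2 1) < 0")
  case True
  define S where "S = sqrt_neg_Delta M0 a (p$2)"
  define RR where "RR = kerr_rho2 a p"
  define P where "P = w$1 - a * (sin (p$3))^2 * w$4"
  define Z where "Z = ((p$2)^2+a^2) * w$4 - a * w$1"
  define sn where "sn = sin (p$3)"
  have "kerr_g M0 a p w (- axis 2 1) = - P"
    by (simp add: P_def kerr_g_def Let_def axis_def algebra_simps)
  then have P: "0 < P" using True by simp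
  have "kerr_g M0 a p w w = (S^2/RR) * P^2 + 2 * P * w$2 + RR * (w$3)^2 + (sn^2/RR) * Z^2"
    unfolding kerr_g_def Let_def S_def RR_def P_def Z_def sn_def
    by (rule kerr_g_quadratic_form_identity[OF sqrt_neg_Delta_sq[OF s] sin_squared_eq kerr_rho2_def])
      (use R in simp)
  moreover have "kerr_g M0 a p w w = 0" using fn unfolding future_null_def by blast
  ultimately have eq: "2*RR*P*(w$2 + S * w$3) = -((S*P - RR*w$3)^2) - sn^2*Z^2"
    using R unfolding RR_def[symmetric] by (simp add: field_simps power2_eq_square)
  have "0 \<le> (S*P - RR*w$3)^2" "0 \<le> sn^2*Z^2" by simp_all
  then have "2*RR*P*(w$2 + S * w$3) \<le> 0" unfolding eq by linarith
  moreover have "0 < 2*RR*P" using P R unfolding RR_def by simp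
  ultimately have le: "w$2 + S * w$3 \<le> 0"
    by (metis mult_pos_pos not_le)
  have Sp: "0 < S" using s S_def by simp
  have "w$2 / S + w$3 = (w$2 + S * w$3) / S" using Sp by (simp add: field_simps)
  also have "\<dots> \<le> 0" using le Sp by (simp add: divide_nonpos_pos)
  finally show ?thesis unfolding barrier_diff_def S_def .
next
  case False
  then obtain c where "c > 0" "w = c *\<^sub>R (- axis 2 1)" using fn unfolding future_null_def by blast
  then show ?thesis using s unfolding barrier_diff_def by (simp add: axis_def)
qed

lemma local_max_second_derivative_nonpos:
  fixes \<phi> \<psi> :: "real \<Rightarrow> real"
  assumes d: "0 < \<delta>" and d1: "\<And>t. \<bar>t\<bar> < \<delta> \<Longrightarrow> (\<phi> has_real_derivative \<psi> t) (at t)"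
    and d2: "(\<psi> has_real_derivative D) (at 0)" and mx: "\<And>t. \<bar>t\<bar> < \<delta> \<Longrightarrow> \<phi> t \<le> \<phi> 0"
  shows "D \<le> 0"
proof (rule ccontr)
  assume "\<not> D \<le> 0"
  then obtain e where e: "0 < e" "\<And>h. 0 < h \<Longrightarrow> h < e \<Longrightarrow> \<psi> 0 < \<psi> (0 + h)"
    using DERIV_pos_inc_right[OF d2] by force
  have \<psi>0: "\<psi> 0 = 0"
    by (rule DERIV_local_max[OF d1[of 0] d]) (use d mx in auto)
  define t0 where "t0 = min e \<delta> / 2"
  have t0: "0 < t0" "t0 < e" "t0 < \<delta>" using e d by (auto simp: t0_def)
  have "(\<phi> has_real_derivative \<psi> x) (at x)" if "0 \<le> x" "x \<le> t0" for x
    using t0 that by (auto intro!: d1)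
  from MVT2[OF t0(1) this] obtain z where z: "0 < z" "z < t0" "\<phi> t0 - \<phi> 0 = (t0 - 0) * \<psi> z"
    by blast
  have "\<psi> z > 0" using e(2)[of z] z t0 \<psi>0 by simp
  then have "\<phi> t0 - \<phi> 0 > 0" using z t0 by simp
  moreover have "\<phi> t0 \<le> \<phi> 0" using mx t0 by simp
  ultimately show False by simp
qed

(* The h-trace of B on span {e1, e2} is trace_numerator h B e1 e2 / gram_det h e1 e2. *)
definition gram_det :: "('v \<Rightarrow> 'v \<Rightarrow> real) \<Rightarrow> 'v \<Rightarrow> 'v \<Rightarrow> real" where
  "gram_det h e1 e2 = h e1 e1 * h e2 e2 - (h e1 e2)^2"

definition trace_numerator :: "('v \<Rightarrow> 'v \<Rightarrow> real) \<Rightarrow> ('v \<Rightarrow> 'v \<Rightarrow> real) \<Rightarrow> 'v \<Rightarrow> 'v \<Rightarrow> real" where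
  "trace_numerator h B e1 e2 = h e2 e2 * B e1 e1 - h e1 e2 * (B e1 e2 + B e2 e1) + h e1 e1 * B e2 e2"

lemma trace_numerator_nonpos:
  fixes H h :: "'v::real_vector \<Rightarrow> 'v \<Rightarrow> real"
  assumes H: "bilinear H" and neg: "\<And>v. H v v \<le> 0"
    and h: "0 < h e1 e1" "0 < gram_det h e1 e2"
  shows "trace_numerator h H e1 e2 \<le> 0"
proof -
  have q: "H e1 e1 * x^2 + (H e1 e2 + H e2 e1) * x * y + H e2 e2 * y^2 \<le> 0" for x y
  proof -
    have "H (x *\<^sub>R e1 + y *\<^sub>R e2) (x *\<^sub>R e1 + y *\<^sub>R e2)
        = H e1 e1 * x^2 + (H e1 e2 + H e2 e1) * x * y + H e2 e2 * y^2"
      using H by (simp add: bilinear_ladd bilinear_radd bilinear_lmul bilinear_rmul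
          algebra_simps power2_eq_square)
    then show ?thesis using neg[of "x *\<^sub>R e1 + y *\<^sub>R e2"] by simp
  qed
  have "h e1 e1 * trace_numerator h H e1 e2 =
      gram_det h e1 e2 * H e1 e1
      + (H e1 e1 * (h e1 e2)^2 + (H e1 e2 + H e2 e1) * h e1 e2 * (- h e1 e1) + H e2 e2 * (- h e1 e1)^2)"
    by (simp add: trace_numerator_def gram_det_def algebra_simps power2_eq_square)
  also have "\<dots> \<le> 0"
  proof -
    have "H e1 e1 \<le> 0" using q[of 1 0] by simp
    then show ?thesis
      using add_nonpos_nonpos[OF mult_nonneg_nonpos[OF less_imp_le[OF h(2)]] q] by blast
  qed
  finally show ?thesis using h(1) by (simp add: mult_le_0_iff)
qed

lemma null_frame_coordinates_eq_0:
  fixes e1 e2 L K v :: "real^4"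
  assumes h: "0 < gram_det (kerr_g M0 a p) e1 e2"
    and o: "kerr_g M0 a p L e1 = 0" "kerr_g M0 a p L e2 = 0" "kerr_g M0 a p K e1 = 0" "kerr_g M0 a p K e2 = 0"
    and n: "kerr_g M0 a p L L = 0" "kerr_g M0 a p K K = 0" "kerr_g M0 a p K L = -1"
    and v: "kerr_g M0 a p v e1 = 0" "kerr_g M0 a p v e2 = 0" "kerr_g M0 a p v L = 0" "kerr_g M0 a p v K = 0"
    and vd: "v = x1 *\<^sub>R e1 + x2 *\<^sub>R e2 + y *\<^sub>R L + z *\<^sub>R K"
  shows "x1 = 0 \<and> x2 = 0 \<and> y = 0 \<and> z = 0"
proof -
  let ?g = "kerr_g M0 a p"
  have h2: "0 < ?g e1 e1 * ?g e2 e2 - (?g e1 e2)^2" using h unfolding gram_det_def .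
  have sym: "?g L K = -1" "?g e1 L = 0" "?g e2 L = 0" "?g e1 K = 0" "?g e2 K = 0"
    "?g e2 e1 = ?g e1 e2"
    using n(3) o kerr_g_commute by metis+
  have E1: "x1 * ?g e1 e1 + x2 * ?g e1 e2 = 0"
    using v(1) unfolding vd by (simp add: kerr_g_bilinear o sym)
  have E2: "x1 * ?g e1 e2 + x2 * ?g e2 e2 = 0"
    using v(2) unfolding vd by (simp add: kerr_g_bilinear o sym)
  have "z = 0" "y = 0" using v(3,4) unfolding vd by (simp_all add: kerr_g_bilinear n sym)
  moreover have "x1 * (?g e1 e1 * ?g e2 e2 - (?g e1 e2)^2) =
       ?g e2 e2 * (x1 * ?g e1 e1 + x2 * ?g e1 e2) - ?g e1 e2 * (x1 * ?g e1 e2 + x2 * ?g e2 e2)"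
    by (simp add: algebra_simps power2_eq_square)
  then have x1: "x1 = 0" using E1 E2 h2 by simp
  moreover have "?g e2 e2 \<noteq> 0" using h2 by auto
  then have "x2 = 0" using E2 unfolding x1 by simp
  ultimately show ?thesis by simp
qed

lemma orthogonal_to_null_frame_eq_0:
  fixes e1 e2 L K t :: "real^4"
  assumes h: "0 < kerr_g M0 a p e1 e1" "0 < gram_det (kerr_g M0 a p) e1 e2"
    and o: "kerr_g M0 a p L e1 = 0" "kerr_g M0 a p L e2 = 0" "kerr_g M0 a p K e1 = 0" "kerr_g M0 a p K e2 = 0"
    and n: "kerr_g M0 a p L L = 0" "kerr_g M0 a p K K = 0" "kerr_g M0 a p K L = -1"
    and t: "kerr_g M0 a p t e1 = 0" "kerr_g M0 a p t e2 = 0" "kerr_g M0 a p t L = 0" "kerr_g M0 a p t K = 0"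
  shows "t = 0"
proof -
  note coords_0 = null_frame_coordinates_eq_0[OF h(2) o n]
  have dist: "e1 \<noteq> e2" "e1 \<noteq> L" "e1 \<noteq> K" "e2 \<noteq> L" "e2 \<noteq> K" "L \<noteq> K"
    using h n by (auto simp: gram_det_def power2_eq_square)
  define B where "B = {e1, e2, L, K}"
  have fin: "finite B" by (simp add: B_def)
  have sumB: "(\<Sum>v\<in>B. u v *\<^sub>R v) = u e1 *\<^sub>R e1 + u e2 *\<^sub>R e2 + u L *\<^sub>R L + u K *\<^sub>R K" for u
    unfolding B_def using dist by (simp add: algebra_simps)
  have "independent B"
  proof
    assume "dependent B"
    then obtain u where u: "\<exists>v\<in>B. u v \<noteq> 0" "(\<Sum>v\<in>B. u v *\<^sub>R v) = 0"
      using dependent_finite[OF fin] by auto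
    have "kerr_g M0 a p (\<Sum>v\<in>B. u v *\<^sub>R v) w = 0" for w
      unfolding u(2) by (simp add: kerr_g_bilinear)
    then have "u e1 = 0 \<and> u e2 = 0 \<and> u L = 0 \<and> u K = 0"
      by (intro coords_0[of "\<Sum>v\<in>B. u v *\<^sub>R v"]) (auto simp: sumB)
    then show False using u(1) unfolding B_def by auto
  qed
  moreover have "card B = DIM(real^4)" unfolding B_def using dist by auto
  ultimately have "span B = UNIV" by (metis dim_eq_card dim_eq_full)
  then obtain u where tu: "t = (\<Sum>v\<in>B. u v *\<^sub>R v)" using span_finite[OF fin] by auto
  then have "u e1 = 0 \<and> u e2 = 0 \<and> u L = 0 \<and> u K = 0"
    using t by (intro coords_0[of t]) (auto simp: sumB)
  then show ?thesis unfolding tu sumB by simp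
qed

lemma barrier_grad_normal_decomposition:
  assumes s: "0 < sqrt_neg_Delta M0 a (q$2)" and R: "0 < kerr_rho2 a q"
    and h: "0 < kerr_g M0 a q e1 e1" "0 < gram_det (kerr_g M0 a q) e1 e2"
    and tangent: "barrier_diff M0 a q e1 = 0" "barrier_diff M0 a q e2 = 0"
    and normal: "kerr_g M0 a q L e1 = 0" "kerr_g M0 a q L e2 = 0"
      "kerr_g M0 a q K e1 = 0" "kerr_g M0 a q K e2 = 0"
    and null: "kerr_g M0 a q L L = 0" "kerr_g M0 a q K K = 0" "kerr_g M0 a q K L = -1"
  shows "barrier_grad M0 a q = (- barrier_diff M0 a q K) *\<^sub>R L + (- barrier_diff M0 a q L) *\<^sub>R K"
proof -
  define t where "t = barrier_grad M0 a q - ((- barrier_diff M0 a q K) *\<^sub>R L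
    + (- barrier_diff M0 a q L) *\<^sub>R K)"
  have gLK: "kerr_g M0 a q L K = -1" using null(3) kerr_g_commute by metis
  have "kerr_g M0 a q t e1 = 0" "kerr_g M0 a q t e2 = 0" "kerr_g M0 a q t L = 0" "kerr_g M0 a q t K = 0"
    unfolding t_def kerr_g_bilinear kerr_g_barrier_grad[OF s R] using tangent normal null gLK
    by simp_all
  then have "t = 0" by (rule orthogonal_to_null_frame_eq_0[OF h normal null])
  then show ?thesis unfolding t_def by (simp only: right_minus_eq)
qed

lemma tangent_killing_decomposition:
  assumes s: "0 < sqrt_neg_Delta M0 a (q$2)" and R: "0 < kerr_rho2 a q"
    and "barrier_diff M0 a q e = 0"
  shows "e - (e$3 * kerr_rho2 a q) *\<^sub>R barrier_grad M0 a q \<in> killing_plane"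
proof -
  have "e$2 = - sqrt_neg_Delta M0 a (q$2) * e$3"
    using assms unfolding barrier_diff_def by (simp add: field_simps)
  then show ?thesis using R by (simp add: killing_plane_def barrier_grad_nth)
qed

lemma barrier_grad_null_derivative:
  assumes a: "0 < a" "a < M0" and q: "q \<in> between_horizons M0 a"
    and Dn: "(barrier_grad M0 a has_derivative Dn) (at q)"
  shows "kerr_dg M0 a q X (barrier_grad M0 a q) (barrier_grad M0 a q)
    + 2 * kerr_g M0 a q (Dn X) (barrier_grad M0 a q) = 0"
proof -
  note between = between_horizonsD[OF a q]
  have "((\<lambda>p. kerr_g M0 a p (barrier_grad M0 a p) (barrier_grad M0 a p)) has_derivative
     (\<lambda>h. kerr_dg M0 a q h (barrier_grad M0 a q) (barrier_grad M0 a q)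
       + kerr_g M0 a q (Dn h) (barrier_grad M0 a q) + kerr_g M0 a q (barrier_grad M0 a q) (Dn h))) (at q)"
    using kerr_g_has_derivative[OF _ has_derivative_ident Dn Dn] between by simp
  then have "(\<lambda>h. kerr_dg M0 a q h (barrier_grad M0 a q) (barrier_grad M0 a q)
       + kerr_g M0 a q (Dn h) (barrier_grad M0 a q) + kerr_g M0 a q (barrier_grad M0 a q) (Dn h))
     = (\<lambda>h. 0)"
    by (rule has_derivative_locally_constant[OF _ open_between_horizons q])
      (simp add: barrier_grad_null between_horizonsD[OF a] between)
  from fun_cong[OF this, of X] show ?thesis
    using kerr_g_commute[of M0 a q "barrier_grad M0 a q" "Dn X"] by simp
qed

lemma barrier_grad_killing_derivative:
  assumes a: "0 < a" "a < M0" and q: "q \<in> between_horizons M0 a"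
    and Dn: "(barrier_grad M0 a has_derivative Dn) (at q)" and Y: "Y \<in> killing_plane"
  shows "kerr_dg M0 a q X (barrier_grad M0 a q) Y + kerr_g M0 a q (Dn X) Y = 0"
proof -
  note between = between_horizonsD[OF a q]
  have "((\<lambda>p. kerr_g M0 a p (barrier_grad M0 a p) Y) has_derivative
     (\<lambda>h. kerr_dg M0 a q h (barrier_grad M0 a q) Y + kerr_g M0 a q (Dn h) Y
       + kerr_g M0 a q (barrier_grad M0 a q) 0)) (at q)"
    using kerr_g_has_derivative[OF _ has_derivative_ident Dn has_derivative_const] between by simp
  then have "(\<lambda>h. kerr_dg M0 a q h (barrier_grad M0 a q) Y + kerr_g M0 a q (Dn h) Y
       + kerr_g M0 a q (barrier_grad M0 a q) 0) = (\<lambda>h. 0)"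
    by (rule has_derivative_locally_constant[OF _ open_between_horizons q])
      (use Y in \<open>simp add: kerr_g_barrier_grad between_horizonsD[OF a] between
        barrier_diff_def killing_plane_def\<close>)
  from fun_cong[OF this, of X] show ?thesis by (simp add: kerr_g_bilinear)
qed

lemma kerr_g_killing_plus_grad:
  assumes s: "0 < sqrt_neg_Delta M0 a (q$2)" and R: "0 < kerr_rho2 a q"
    and P: "P \<in> killing_plane" "P' \<in> killing_plane"
  shows "kerr_g M0 a q (P + c *\<^sub>R barrier_grad M0 a q) (P' + c' *\<^sub>R barrier_grad M0 a q)
    = kerr_g M0 a q P P'"
proof -
  have "kerr_g M0 a q (barrier_grad M0 a q) P = 0" "kerr_g M0 a q (barrier_grad M0 a q) P' = 0"
    using P by (simp_all add: kerr_g_barrier_grad[OF s R] barrier_diff_def killing_plane_def)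
  then show ?thesis
    using barrier_grad_null[OF s R] by (simp add: kerr_g_bilinear kerr_g_commute[of _ _ _ P])
qed

(* kerr_B M0 a q X Y (Dn X) n is the covariant Hessian g(Y, \<nabla>_X n) of the barrier. *)
lemma barrier_hessian_killing_plus_grad:
  assumes a: "0 < a" "a < M0" and q: "q \<in> between_horizons M0 a"
    and Dn: "(barrier_grad M0 a has_derivative Dn) (at q)"
    and P: "P \<in> killing_plane" "P' \<in> killing_plane"
  defines "n \<equiv> barrier_grad M0 a q"
  shows "kerr_B M0 a q (P + c *\<^sub>R n) (P' + c' *\<^sub>R n) (Dn (P + c *\<^sub>R n)) n
    = kerr_dg M0 a q n P P' / 2"
proof -
  have R: "kerr_rho2 a q \<noteq> 0" using between_horizonsD[OF a q] by simp
  have lin: "linear Dn" using Dn has_derivative_linear by blast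
  have z: "kerr_dg M0 a q P u w = 0" "kerr_dg M0 a q P' u w = 0" "Dn P = 0" "Dn P' = 0" for u w
    using P kerr_dg_killing_direction[OF R] barrier_grad_derivative_killing[OF Dn] by auto
  have c1: "kerr_dg M0 a q n n P' + kerr_g M0 a q (Dn n) P' = 0"
    unfolding n_def by (rule barrier_grad_killing_derivative[OF a q Dn P(2)])
  have c2: "kerr_dg M0 a q n n n + 2 * kerr_g M0 a q (Dn n) n = 0"
    unfolding n_def by (rule barrier_grad_null_derivative[OF a q Dn])
  have sym: "kerr_dg M0 a q n P n = kerr_dg M0 a q n n P" "kerr_dg M0 a q n P' n = kerr_dg M0 a q n n P'"
    "kerr_dg M0 a q n P' P = kerr_dg M0 a q n P P'"
    "kerr_g M0 a q P' (Dn n) = kerr_g M0 a q (Dn n) P'" "kerr_g M0 a q n (Dn n) = kerr_g M0 a q (Dn n) n"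
    using kerr_dg_commute kerr_g_commute by metis+
  have "kerr_B M0 a q (P + c *\<^sub>R n) (P' + c' *\<^sub>R n) (Dn (P + c *\<^sub>R n)) n - kerr_dg M0 a q n P P' / 2
     = c * (kerr_dg M0 a q n n P' + kerr_g M0 a q (Dn n) P')
       + (c * c' / 2) * (kerr_dg M0 a q n n n + 2 * kerr_g M0 a q (Dn n) n)"
    unfolding kerr_B_eq[OF R] linear_add[OF lin] linear_scale[OF lin]
    by (simp add: kerr_dg_linear_direction[OF R] kerr_dg_bilinear kerr_g_bilinear z sym field_simps)
  then show ?thesis using c1 c2 by simp
qed

lemma killing_plane_trace_identities:
  assumes "p1 \<in> killing_plane" "p2 \<in> killing_plane"
  defines "w \<equiv> p1$1 * p2$4 - p2$1 * p1$4"
  shows "trace_numerator (kerr_g M0 a q) (\<lambda>X Y. kerr_dg M0 a q Z X Y / 2) p1 p2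
      = w^2 * (kerr_comp M0 a q 4 4 * kerr_dcomp M0 a q Z 1 1
         - 2 * kerr_comp M0 a q 1 4 * kerr_dcomp M0 a q Z 1 4
         + kerr_comp M0 a q 1 1 * kerr_dcomp M0 a q Z 4 4) / 2"
    and "gram_det (kerr_g M0 a q) p1 p2
      = w^2 * (kerr_comp M0 a q 1 1 * kerr_comp M0 a q 4 4 - (kerr_comp M0 a q 1 4)^2)"
proof -
  have T: "(x2*x2*G11 + (x2*y2 + y2*x2)*G14 + y2*y2*G44) * ((x1*x1*D11 + (x1*y1 + y1*x1)*D14 + y1*y1*D44)/2)
     - (x1*x2*G11 + (x1*y2 + y1*x2)*G14 + y1*y2*G44) *
       ((x1*x2*D11 + (x1*y2 + y1*x2)*D14 + y1*y2*D44)/2 + (x2*x1*D11 + (x2*y1 + y2*x1)*D14 + y2*y1*D44)/2)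
     + (x1*x1*G11 + (x1*y1 + y1*x1)*G14 + y1*y1*G44) * ((x2*x2*D11 + (x2*y2 + y2*x2)*D14 + y2*y2*D44)/2)
   = (x1*y2 - x2*y1)^2 * (G44*D11 - 2*G14*D14 + G11*D44) / 2"
    and G: "(x1*x1*G11 + (x1*y1 + y1*x1)*G14 + y1*y1*G44) * (x2*x2*G11 + (x2*y2 + y2*x2)*G14 + y2*y2*G44)
     - (x1*x2*G11 + (x1*y2 + y1*x2)*G14 + y1*y2*G44)^2 = (x1*y2 - x2*y1)^2 * (G11*G44 - G14^2)"
    for x1 y1 x2 y2 G11 G14 G44 D11 D14 D44 :: real
    by (simp_all add: field_simps power2_eq_square)
  show "trace_numerator (kerr_g M0 a q) (\<lambda>X Y. kerr_dg M0 a q Z X Y / 2) p1 p2 = w^2 *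
      (kerr_comp M0 a q 4 4 * kerr_dcomp M0 a q Z 1 1 - 2 * kerr_comp M0 a q 1 4 * kerr_dcomp M0 a q Z 1 4
       + kerr_comp M0 a q 1 1 * kerr_dcomp M0 a q Z 4 4) / 2"
    unfolding trace_numerator_def w_def kerr_g_killing_plane[OF assms(1,1)]
      kerr_g_killing_plane[OF assms(1,2)] kerr_g_killing_plane[OF assms(2,2)]
      kerr_dg_killing_plane[OF assms(1,1)] kerr_dg_killing_plane[OF assms(1,2)]
      kerr_dg_killing_plane[OF assms(2,1)] kerr_dg_killing_plane[OF assms(2,2)]
    by (rule T)
  show "gram_det (kerr_g M0 a q) p1 p2
      = w^2 * (kerr_comp M0 a q 1 1 * kerr_comp M0 a q 4 4 - (kerr_comp M0 a q 1 4)^2)"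
    unfolding gram_det_def w_def kerr_g_killing_plane[OF assms(1,1)]
      kerr_g_killing_plane[OF assms(1,2)] kerr_g_killing_plane[OF assms(2,2)]
    by (rule G)
qed

lemma kerr_vphi_block_det:
  assumes "kerr_rho2 a p \<noteq> 0"
  shows "kerr_comp M0 a p 1 1 * kerr_comp M0 a p 4 4 - (kerr_comp M0 a p 1 4)^2
     = (2*M0*p$2 - a^2 - (p$2)^2) * (sin (p$3))^2"
proof -
  have "(- (1 - 2*M0*r/R)) * ((r^2 + a^2 + 2*M0*r*a^2 * sn^2/R) * sn^2) - (- (2*M0*a*r * sn^2/R))^2
     = (2*M0*r - a^2 - r^2) * sn^2"
    if sn: "sn^2 = 1 - c^2" and R: "R = r^2 + a^2*c^2" and "R \<noteq> 0" for r R sn c :: real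
  proof -
    have "(- (1 - 2*M0*r/R)) * ((r^2 + a^2 + 2*M0*r*a^2 * sn^2/R) * sn^2) - (- (2*M0*a*r * sn^2/R))^2
       - (2*M0*r - a^2 - r^2) * sn^2
       = ((- (R - 2*M0*r)) * ((R*(r^2 + a^2) + 2*M0*r*a^2 * sn^2) * sn^2) - (2*M0*a*r * sn^2)^2
       - R*R*(2*M0*r - a^2 - r^2) * sn^2) / (R*R)"
      using \<open>R \<noteq> 0\<close> by (simp add: field_simps power2_eq_square)
    also have "(- (R - 2*M0*r)) * ((R*(r^2 + a^2) + 2*M0*r*a^2 * sn^2) * sn^2) - (2*M0*a*r * sn^2)^2
       - R*R*(2*M0*r - a^2 - r^2) * sn^2 = 0"
      unfolding R using sn by algebra
    finally show ?thesis by simp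
  qed
  from this[OF sin_squared_eq kerr_rho2_def assms] show ?thesis
    by (simp add: kerr_comp_def kerr_g_def axis_def Let_def)
qed

lemma kerr_vphi_block_det_derivative:
  assumes a: "0 < a" "a < M0" and q: "q \<in> between_horizons M0 a"
  shows "kerr_dcomp M0 a q X 1 1 * kerr_comp M0 a q 4 4 + kerr_comp M0 a q 1 1 * kerr_dcomp M0 a q X 4 4
     - 2 * kerr_comp M0 a q 1 4 * kerr_dcomp M0 a q X 1 4
   = (2*M0 - 2*q$2) * X$2 * (sin (q$3))^2 + (2*M0*q$2 - a^2 - (q$2)^2) * (2 * sin (q$3) * cos (q$3) * X$3)"
proof -
  have R: "kerr_rho2 a q \<noteq> 0" using between_horizonsD[OF a q] by simp
  note c = kerr_comp_has_derivative[OF R, of M0]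
  have d1: "((\<lambda>p. kerr_comp M0 a p 1 1 * kerr_comp M0 a p 4 4 - (kerr_comp M0 a p 1 4)^2) has_derivative
     (\<lambda>h. (kerr_comp M0 a q 1 1 * kerr_dcomp M0 a q h 4 4 + kerr_dcomp M0 a q h 1 1 * kerr_comp M0 a q 4 4)
        - of_nat 2 * kerr_dcomp M0 a q h 1 4 * kerr_comp M0 a q 1 4 ^ (2 - 1))) (at q)"
    by (intro has_derivative_diff has_derivative_mult has_derivative_power c)
  have "((\<lambda>p. (2*M0*p$2 - a^2 - (p$2)^2) * (sin (p$3))^2) has_derivative
     (\<lambda>h. (kerr_comp M0 a q 1 1 * kerr_dcomp M0 a q h 4 4 + kerr_dcomp M0 a q h 1 1 * kerr_comp M0 a q 4 4)
        - of_nat 2 * kerr_dcomp M0 a q h 1 4 * kerr_comp M0 a q 1 4 ^ (2 - 1))) (at q)"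
  proof (rule has_derivative_transform_within_open[OF d1 open_between_horizons q])
    fix y assume "y \<in> between_horizons M0 a"
    then have "kerr_rho2 a y \<noteq> 0" using between_horizonsD[OF a] by fastforce
    then show "kerr_comp M0 a y 1 1 * kerr_comp M0 a y 4 4 - (kerr_comp M0 a y 1 4)^2
        = (2*M0*y$2 - a^2 - (y$2)^2) * (sin (y$3))^2" by (rule kerr_vphi_block_det)
  qed
  moreover have "((\<lambda>p. (2*M0*p$2 - a^2 - (p$2)^2) * (sin (p$3))^2) has_derivative
     (\<lambda>h. (2*M0*q$2 - a^2 - (q$2)^2) * (2 * sin (q$3) * cos (q$3) * h$3)
       + (2*M0 - 2*q$2) * h$2 * (sin (q$3))^2)) (at q)"
    by (auto intro!: derivative_eq_intros simp: algebra_simps power2_eq_square)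
  ultimately have "(\<lambda>h. (kerr_comp M0 a q 1 1 * kerr_dcomp M0 a q h 4 4
        + kerr_dcomp M0 a q h 1 1 * kerr_comp M0 a q 4 4)
        - of_nat 2 * kerr_dcomp M0 a q h 1 4 * kerr_comp M0 a q 1 4 ^ (2 - 1))
     = (\<lambda>h. (2*M0*q$2 - a^2 - (q$2)^2) * (2 * sin (q$3) * cos (q$3) * h$3)
       + (2*M0 - 2*q$2) * h$2 * (sin (q$3))^2)"
    by (rule has_derivative_unique)
  from fun_cong[OF this, of X] show ?thesis by (simp add: algebra_simps)
qed

(* This is where the defining inequality cot \<theta> > (M0 - r) / sqrt (-\<Delta>) of X enters. *)
lemma kerr_vphi_block_det_grad_pos:
  assumes a: "0 < a" "a < M0" and qX: "q \<in> region_X M0 a"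
  defines "n \<equiv> barrier_grad M0 a q"
  shows "0 < kerr_comp M0 a q 4 4 * kerr_dcomp M0 a q n 1 1
    - 2 * kerr_comp M0 a q 1 4 * kerr_dcomp M0 a q n 1 4 + kerr_comp M0 a q 1 1 * kerr_dcomp M0 a q n 4 4"
proof -
  have q: "q \<in> between_horizons M0 a" using qX region_X_subset_between_horizons by blast
  note between = between_horizonsD[OF a q]
  define s where "s = sqrt_neg_Delta M0 a (q$2)"
  define R where "R = kerr_rho2 a q"
  define r where "r = q$2"
  define sn where "sn = sin (q$3)"
  define cs where "cs = cos (q$3)"
  have sp: "0 < s" and Rp: "0 < R" using between unfolding s_def R_def by auto
  have "0 < q$3" "q$3 < pi" using qX unfolding region_X_def by auto
  then have snp: "0 < sn" unfolding sn_def by (rule sin_gt_zero)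
  have "(M0 - r) / s < cs / sn"
    using qX unfolding region_X_def s_def sqrt_neg_Delta_def r_def cs_def sn_def cot_def by auto
  then have "(M0 - r) / s * (s * sn) < cs / sn * (s * sn)"
    by (rule mult_strict_right_mono) (use sp snp in simp)
  then have key: "0 < s * cs - (M0 - r) * sn" using sp snp by (simp add: mult.commute)
  have s2: "s^2 = 2*M0*r - a^2 - r^2" unfolding s_def r_def by (rule sqrt_neg_Delta_sq[OF between(1)])
  have "kerr_comp M0 a q 4 4 * kerr_dcomp M0 a q n 1 1
    - 2 * kerr_comp M0 a q 1 4 * kerr_dcomp M0 a q n 1 4 + kerr_comp M0 a q 1 1 * kerr_dcomp M0 a q n 4 4
    = (2*M0 - 2*q$2) * n$2 * (sin (q$3))^2 + (2*M0*q$2 - a^2 - (q$2)^2) * (2 * sin (q$3) * cos (q$3) * n$3)"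
    using kerr_vphi_block_det_derivative[OF a q, of n] by (simp add: algebra_simps)
  also have "\<dots> = (2*M0 - 2*r) * (-s/R) * sn^2 + s^2 * (2 * sn * cs * (1/R))"
    unfolding n_def barrier_grad_nth s2 by (simp add: s_def R_def r_def sn_def cs_def)
  also have "\<dots> = (2 * s * sn / R) * (s * cs - (M0 - r) * sn)"
    using Rp by (simp add: field_simps power2_eq_square)
  also have "\<dots> > 0" using sp snp Rp key by simp
  finally show ?thesis .
qed

lemma barrier_hessian_trace_pos:
  assumes a: "0 < a" "a < M0" and qX: "q \<in> region_X M0 a"
    and Dn: "(barrier_grad M0 a has_derivative Dn) (at q)"
    and tangent: "barrier_diff M0 a q e1 = 0" "barrier_diff M0 a q e2 = 0"
    and gram: "0 < gram_det (kerr_g M0 a q) e1 e2"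
  shows "0 < trace_numerator (kerr_g M0 a q)
    (\<lambda>X Y. kerr_B M0 a q X Y (Dn X) (barrier_grad M0 a q)) e1 e2"
proof -
  have q: "q \<in> between_horizons M0 a" using qX region_X_subset_between_horizons by blast
  note between = between_horizonsD[OF a q]
  define n where "n = barrier_grad M0 a q"
  define c1 where "c1 = e1$3 * kerr_rho2 a q"
  define c2 where "c2 = e2$3 * kerr_rho2 a q"
  define p1 where "p1 = e1 - c1 *\<^sub>R n"
  define p2 where "p2 = e2 - c2 *\<^sub>R n"
  define w where "w = p1$1 * p2$4 - p2$1 * p1$4"
  have p: "p1 \<in> killing_plane" "p2 \<in> killing_plane"
    unfolding p1_def p2_def c1_def c2_def n_def
    using tangent_killing_decomposition[OF between(1,2)] tangent by auto
  have e: "e1 = p1 + c1 *\<^sub>R n" "e2 = p2 + c2 *\<^sub>R n"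
    unfolding p1_def p2_def by simp_all
  note B = barrier_hessian_killing_plus_grad[OF a q Dn, folded n_def]
  note G = kerr_g_killing_plus_grad[OF between(1,2), folded n_def]
  note I = killing_plane_trace_identities[OF p, of M0 a q, folded w_def]
  have "trace_numerator (kerr_g M0 a q) (\<lambda>X Y. kerr_B M0 a q X Y (Dn X) n) e1 e2
      = trace_numerator (kerr_g M0 a q) (\<lambda>X Y. kerr_dg M0 a q n X Y / 2) p1 p2"
    unfolding trace_numerator_def e B[OF p(1,1)] B[OF p(1,2)] B[OF p(2,1)] B[OF p(2,2)]
      G[OF p(1,1)] G[OF p(1,2)] G[OF p(2,1)] G[OF p(2,2)] ..
  also have "\<dots> = w^2 * (kerr_comp M0 a q 4 4 * kerr_dcomp M0 a q n 1 1
         - 2 * kerr_comp M0 a q 1 4 * kerr_dcomp M0 a q n 1 4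
         + kerr_comp M0 a q 1 1 * kerr_dcomp M0 a q n 4 4) / 2"
    by (rule I(1))
  also have "\<dots> > 0"
  proof -
    have "gram_det (kerr_g M0 a q) e1 e2 = gram_det (kerr_g M0 a q) p1 p2"
      unfolding gram_det_def e G[OF p(1,1)] G[OF p(1,2)] G[OF p(2,2)] ..
    then have "w^2 \<noteq> 0" using gram unfolding I(2) by auto
    then show ?thesis using kerr_vphi_block_det_grad_pos[OF a qX, folded n_def] by simp
  qed
  finally show ?thesis unfolding n_def .
qed

lemma open_contains_line_interval:
  fixes w :: "'a::real_normed_vector"
  assumes "open U" "u0 \<in> U"
  obtains \<delta> where "0 < \<delta>" "\<And>t. \<bar>t\<bar> < \<delta> \<Longrightarrow> u0 + t *\<^sub>R w \<in> U"
proof -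
  obtain e where e: "0 < e" "ball u0 e \<subseteq> U" using assms open_contains_ball by blast
  have np: "0 < norm w + 1" by (simp add: add_nonneg_pos)
  show thesis
  proof
    show "0 < e / (norm w + 1)" using e np by simp
    fix t :: real assume t: "\<bar>t\<bar> < e / (norm w + 1)"
    have "norm (t *\<^sub>R w) \<le> \<bar>t\<bar> * (norm w + 1)" by (simp add: mult_left_mono)
    also have "\<dots> < e" using t np by (simp add: pos_less_divide_eq)
    finally show "u0 + t *\<^sub>R w \<in> U" using e by (auto simp: dist_norm)
  qed
qed

lemma barrier_second_variation_nonpos:
  fixes f :: "real \<times> real \<Rightarrow> real^4"
  assumes a: "0 < a" "a < M0" and U: "open U" "u0 \<in> U"
    and fd: "\<And>u. u \<in> U \<Longrightarrow> (f has_derivative fd u) (at u)"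
    and E: "\<And>u. u \<in> U \<Longrightarrow> ((\<lambda>x. fd x w) has_derivative E u) (at u)"
    and between: "\<And>u. u \<in> U \<Longrightarrow> f u \<in> between_horizons M0 a"
    and max: "\<And>u. u \<in> U \<Longrightarrow> barrier M0 a (f u) \<le> barrier M0 a (f u0)"
    and Dn: "(barrier_grad M0 a has_derivative Dn) (at (f u0))"
  shows "kerr_dg M0 a (f u0) (fd u0 w) (barrier_grad M0 a (f u0)) (fd u0 w)
     + kerr_g M0 a (f u0) (Dn (fd u0 w)) (fd u0 w)
     + kerr_g M0 a (f u0) (barrier_grad M0 a (f u0)) (E u0 w) \<le> 0"
proof -
  define \<Psi> where "\<Psi> u = kerr_g M0 a (f u) (barrier_grad M0 a (f u)) (fd u w)" for u
  define D\<Psi> where "D\<Psi> h = kerr_dg M0 a (f u0) (fd u0 h) (barrier_grad M0 a (f u0)) (fd u0 w)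
     + kerr_g M0 a (f u0) (Dn (fd u0 h)) (fd u0 w)
     + kerr_g M0 a (f u0) (barrier_grad M0 a (f u0)) (E u0 h)" for h
  have R0: "kerr_rho2 a (f u0) \<noteq> 0" using between_horizonsD[OF a between[OF U(2)]] by simp
  have d\<Psi>: "(\<Psi> has_derivative D\<Psi>) (at u0)"
    unfolding \<Psi>_def[abs_def] D\<Psi>_def[abs_def]
    by (rule kerr_g_has_derivative[OF R0 fd[OF U(2)] has_derivative_compose[OF fd[OF U(2)] Dn] E[OF U(2)]])
  obtain \<delta> where dp: "0 < \<delta>" and inU: "\<And>t. \<bar>t\<bar> < \<delta> \<Longrightarrow> u0 + t *\<^sub>R w \<in> U"
    using open_contains_line_interval[OF U] by blast
  have line: "((\<lambda>t. u0 + t *\<^sub>R w) has_derivative (\<lambda>h. h *\<^sub>R w)) (at t)" for t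
    by (auto intro!: derivative_eq_intros)
  have "((\<lambda>t. barrier M0 a (f (u0 + t *\<^sub>R w))) has_real_derivative \<Psi> (u0 + t *\<^sub>R w)) (at t)"
    if t: "\<bar>t\<bar> < \<delta>" for t
  proof -
    let ?u = "u0 + t *\<^sub>R w"
    have uU: "?u \<in> U" by (rule inU[OF t])
    note bu = between_horizonsD[OF a between[OF uU]]
    have "((\<lambda>t. barrier M0 a (f (u0 + t *\<^sub>R w))) has_derivative
        (\<lambda>h. barrier_diff M0 a (f ?u) (fd ?u (h *\<^sub>R w)))) (at t)"
      using has_derivative_compose[OF has_derivative_compose[OF line fd[OF uU]]
          barrier_has_derivative[OF bu(3)]] .
    moreover have "barrier_diff M0 a (f ?u) (fd ?u (h *\<^sub>R w)) = \<Psi> ?u * h" for h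
      using linear_scale[OF has_derivative_linear[OF fd[OF uU]]]
      by (simp add: \<Psi>_def kerr_g_barrier_grad[OF bu(1,2)] barrier_diff_def algebra_simps)
    ultimately show ?thesis unfolding has_field_derivative_def by simp
  qed
  moreover have "((\<lambda>t. \<Psi> (u0 + t *\<^sub>R w)) has_real_derivative D\<Psi> w) (at 0)"
  proof -
    have "((\<lambda>t. \<Psi> (u0 + t *\<^sub>R w)) has_derivative (\<lambda>h. D\<Psi> (h *\<^sub>R w))) (at 0)"
      using has_derivative_compose[OF line, of \<Psi> D\<Psi> 0] d\<Psi> by simp
    moreover have "D\<Psi> (h *\<^sub>R w) = D\<Psi> w * h" for h
      using linear_scale[OF has_derivative_linear[OF d\<Psi>]] by (simp add: mult.commute)
    ultimately show ?thesis unfolding has_field_derivative_def by simp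
  qed
  ultimately have "D\<Psi> w \<le> 0"
    by (rule local_max_second_derivative_nonpos[OF dp]) (use max inU in auto)
  then show ?thesis unfolding D\<Psi>_def .
qed

lemma barrier_second_variation_trace_nonpos:
  fixes f :: "real \<times> real \<Rightarrow> real^4"
  assumes a: "0 < a" "a < M0" and U: "open U" "u0 \<in> U"
    and fd: "\<And>u. u \<in> U \<Longrightarrow> (f has_derivative fd u) (at u)"
    and fdd: "\<And>v u. u \<in> U \<Longrightarrow> ((\<lambda>x. fd x v) has_derivative fdd v u) (at u)"
    and between: "\<And>u. u \<in> U \<Longrightarrow> f u \<in> between_horizons M0 a"
    and max: "\<And>u. u \<in> U \<Longrightarrow> barrier M0 a (f u) \<le> barrier M0 a (f u0)"
    and Dn: "(barrier_grad M0 a has_derivative Dn) (at (f u0))"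
    and h: "0 < kerr_g M0 a (f u0) (fd u0 (1,0)) (fd u0 (1,0))"
      "0 < gram_det (kerr_g M0 a (f u0)) (fd u0 (1,0)) (fd u0 (0,1))"
  shows "trace_numerator (\<lambda>v w. kerr_g M0 a (f u0) (fd u0 v) (fd u0 w))
    (\<lambda>v w. kerr_dg M0 a (f u0) (fd u0 v) (barrier_grad M0 a (f u0)) (fd u0 w)
      + kerr_g M0 a (f u0) (Dn (fd u0 v)) (fd u0 w)
      + kerr_g M0 a (f u0) (barrier_grad M0 a (f u0)) (fdd w u0 v)) (1,0) (0,1) \<le> 0"
proof (rule trace_numerator_nonpos)
  have R: "kerr_rho2 a (f u0) \<noteq> 0" using between_horizonsD[OF a between[OF U(2)]] by simp
  have lin_fd: "linear (fd u0)" using fd[OF U(2)] by (rule has_derivative_linear)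
  have lin_Dn: "linear Dn" using Dn by (rule has_derivative_linear)
  have lin_fdd: "linear (fdd w u0)" for w using fdd[OF U(2)] by (rule has_derivative_linear)
  have lin_fdd': "linear (\<lambda>w. fdd w u0 v)" for v
    by (rule derivative_linear_in_parameter[OF U _ fdd]) (rule has_derivative_linear[OF fd])
  show "bilinear (\<lambda>v w. kerr_dg M0 a (f u0) (fd u0 v) (barrier_grad M0 a (f u0)) (fd u0 w)
      + kerr_g M0 a (f u0) (Dn (fd u0 v)) (fd u0 w)
      + kerr_g M0 a (f u0) (barrier_grad M0 a (f u0)) (fdd w u0 v))"
    unfolding bilinear_def
    by (intro conjI allI linearI) (simp_all add: linear_add[OF lin_fd] linear_scale[OF lin_fd]
        linear_add[OF lin_Dn] linear_scale[OF lin_Dn] linear_add[OF lin_fdd] linear_scale[OF lin_fdd]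
        linear_add[OF lin_fdd'] linear_scale[OF lin_fdd'] kerr_dg_linear_direction[OF R]
        kerr_dg_bilinear kerr_g_bilinear algebra_simps)
qed (use barrier_second_variation_nonpos[OF a U fd fdd between max Dn] h in
      \<open>simp_all add: gram_det_def\<close>)

lemma orthogonality_derivative:
  fixes f :: "real \<times> real \<Rightarrow> real^4"
  assumes U: "open U" "u0 \<in> U" and fd: "\<And>u. u \<in> U \<Longrightarrow> (f has_derivative fd u) (at u)"
    and E: "\<And>u. u \<in> U \<Longrightarrow> ((\<lambda>x. fd x w) has_derivative E u) (at u)"
    and Md: "\<And>u. u \<in> U \<Longrightarrow> ((M \<circ> f) has_derivative Md u) (at u)"
    and orth: "\<And>u. u \<in> U \<Longrightarrow> kerr_g M0 a (f u) (M (f u)) (fd u w) = 0"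
    and R: "kerr_rho2 a (f u0) \<noteq> 0"
  shows "kerr_dg M0 a (f u0) (fd u0 v) (M (f u0)) (fd u0 w) + kerr_g M0 a (f u0) (Md u0 v) (fd u0 w)
      + kerr_g M0 a (f u0) (M (f u0)) (E u0 v) = 0"
proof -
  have "((\<lambda>u. M (f u)) has_derivative Md u0) (at u0)" using Md[OF U(2)] by (simp add: o_def)
  from kerr_g_has_derivative[OF R fd[OF U(2)] this E[OF U(2)]]
  have "(\<lambda>h. kerr_dg M0 a (f u0) (fd u0 h) (M (f u0)) (fd u0 w) + kerr_g M0 a (f u0) (Md u0 h) (fd u0 w)
        + kerr_g M0 a (f u0) (M (f u0)) (E u0 h)) = (\<lambda>x. 0)"
    by (rule has_derivative_locally_constant[OF _ U]) (simp add: orth U(2))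
  then show ?thesis by (rule fun_cong)
qed

lemma second_variation_normal_decomposition:
  assumes R: "kerr_rho2 a q \<noteq> 0"
    and l: "kerr_dg M0 a q X L Y + kerr_g M0 a q dl Y + kerr_g M0 a q L F = 0"
    and k: "kerr_dg M0 a q X K Y + kerr_g M0 a q dk Y + kerr_g M0 a q K F = 0"
    and n: "n = \<alpha> *\<^sub>R L + \<beta> *\<^sub>R K"
  shows "kerr_dg M0 a q X n Y + kerr_g M0 a q dn Y + kerr_g M0 a q n F
    = - \<alpha> * kerr_B M0 a q X Y dl L - \<beta> * kerr_B M0 a q X Y dk K + kerr_B M0 a q X Y dn n"
proof -
  have sym: "kerr_g M0 a q Y dl = kerr_g M0 a q dl Y" "kerr_g M0 a q Y dk = kerr_g M0 a q dk Y"
    "kerr_g M0 a q Y dn = kerr_g M0 a q dn Y"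
    "kerr_dg M0 a q X Y L = kerr_dg M0 a q X L Y" "kerr_dg M0 a q X Y K = kerr_dg M0 a q X K Y"
    "kerr_dg M0 a q L Y X = kerr_dg M0 a q L X Y" "kerr_dg M0 a q K Y X = kerr_dg M0 a q K X Y"
    using kerr_g_commute kerr_dg_commute by metis+
  have "kerr_dg M0 a q X n Y + kerr_g M0 a q dn Y + kerr_g M0 a q n F
      - (- \<alpha> * kerr_B M0 a q X Y dl L - \<beta> * kerr_B M0 a q X Y dk K + kerr_B M0 a q X Y dn n)
    = \<alpha> * (kerr_dg M0 a q X L Y + kerr_g M0 a q dl Y + kerr_g M0 a q L F)
      + \<beta> * (kerr_dg M0 a q X K Y + kerr_g M0 a q dk Y + kerr_g M0 a q K F)"
    unfolding kerr_B_eq[OF R] n kerr_dg_linear_direction[OF R] kerr_dg_bilinear kerr_g_bilinear sym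
    by (simp add: field_simps)
  then show ?thesis using l k by simp
qed

lemma expansion_eq_trace_numerator:
  assumes "(f has_derivative fd) (at u)" "((l \<circ> f) has_derivative Ld) (at u)"
  shows "expansion M0 a l f u =
    trace_numerator (\<lambda>v w. kerr_g M0 a (f u) (fd v) (fd w))
      (\<lambda>v w. kerr_B M0 a (f u) (fd v) (fd w) (Ld v) (l (f u))) (1,0) (0,1)
    / gram_det (\<lambda>v w. kerr_g M0 a (f u) (fd v) (fd w)) (1,0) (0,1)"
  using frechet_derivative_at[OF assms(1)] frechet_derivative_at[OF assms(2)]
  by (simp add: expansion_def Let_def ch_e1_def ch_e2_def trace_numerator_def gram_det_def)

lemma barrier_diff_vanishes_at_max:
  assumes U: "open U" "u0 \<in> U" and fd: "(f has_derivative fd) (at u0)"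
    and r: "\<bar>f u0 $ 2 - M0\<bar> < sqrt (M0^2 - a^2)"
    and max: "\<And>u. u \<in> U \<Longrightarrow> barrier M0 a (f u) \<le> barrier M0 a (f u0)"
  shows "barrier_diff M0 a (f u0) (fd v) = 0"
proof -
  have "((\<lambda>u. barrier M0 a (f u)) has_derivative (\<lambda>h. barrier_diff M0 a (f u0) (fd h))) (at u0)"
    using has_derivative_compose[OF fd barrier_has_derivative[OF r]] .
  moreover have "eventually (\<lambda>y. barrier M0 a (f y) \<le> barrier M0 a (f u0)) (at u0)"
    using eventually_at_in_open'[OF U] by (rule eventually_mono) (rule max)
  ultimately have "(\<lambda>h. barrier_diff M0 a (f u0) (fd h)) = (\<lambda>h. 0)"
    by (rule has_derivative_local_max)
  then show ?thesis by (rule fun_cong)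
qed

lemma spacelike_surface_chart_gram:
  assumes "spacelike_surface M0 a S" "surface_chart S f U W" "u \<in> U" "(f has_derivative fd) (at u)"
  shows "0 < kerr_g M0 a (f u) (fd (1,0)) (fd (1,0))"
    and "0 < gram_det (kerr_g M0 a (f u)) (fd (1,0)) (fd (0,1))"
proof -
  have "ch_e1 f u = fd (1,0)" "ch_e2 f u = fd (0,1)"
    unfolding ch_e1_def ch_e2_def frechet_derivative_at[OF assms(4)] by simp_all
  moreover have "0 < kerr_g M0 a (f u) (ch_e1 f u) (ch_e1 f u)"
    "0 < gram_det (kerr_g M0 a (f u)) (ch_e1 f u) (ch_e2 f u)"
    using assms(1-3) unfolding spacelike_surface_def Let_def gram_det_def by blast+
  ultimately show "0 < kerr_g M0 a (f u) (fd (1,0)) (fd (1,0))"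
    "0 < gram_det (kerr_g M0 a (f u)) (fd (1,0)) (fd (0,1))" by simp_all
qed

lemma no_marginally_trapped_chart_at_barrier_max:
  fixes f :: "real \<times> real \<Rightarrow> real^4" and l k :: "real^4 \<Rightarrow> real^4"
  assumes a: "0 < a" "a < M0" and U: "open U" "u0 \<in> U"
    and fd: "\<And>u. u \<in> U \<Longrightarrow> (f has_derivative fd u) (at u)"
    and fdd: "\<And>v u. u \<in> U \<Longrightarrow> ((\<lambda>x. fd x v) has_derivative fdd v u) (at u)"
    and between: "\<And>u. u \<in> U \<Longrightarrow> f u \<in> between_horizons M0 a" and X: "f u0 \<in> region_X M0 a"
    and max: "\<And>u. u \<in> U \<Longrightarrow> barrier M0 a (f u) \<le> barrier M0 a (f u0)"
    and Ld: "\<And>u. u \<in> U \<Longrightarrow> ((l \<circ> f) has_derivative Ld u) (at u)"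
    and Kd: "\<And>u. u \<in> U \<Longrightarrow> ((k \<circ> f) has_derivative Kd u) (at u)"
    and l_normal: "\<And>u w. u \<in> U \<Longrightarrow> kerr_g M0 a (f u) (l (f u)) (fd u w) = 0"
    and k_normal: "\<And>u w. u \<in> U \<Longrightarrow> kerr_g M0 a (f u) (k (f u)) (fd u w) = 0"
    and null: "future_null M0 a (f u0) (l (f u0))" "future_null M0 a (f u0) (k (f u0))"
      "kerr_g M0 a (f u0) (k (f u0)) (l (f u0)) = -1"
    and spacelike: "0 < kerr_g M0 a (f u0) (fd u0 (1,0)) (fd u0 (1,0))"
      "0 < gram_det (kerr_g M0 a (f u0)) (fd u0 (1,0)) (fd u0 (0,1))"
    and expansions: "expansion M0 a l f u0 \<le> 0" "expansion M0 a k f u0 \<le> 0"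
  shows False
proof -
  define q where "q = f u0"
  define n where "n = barrier_grad M0 a q"
  define L where "L = l q"
  define K where "K = k q"
  define h where "h = (\<lambda>v w. kerr_g M0 a q (fd u0 v) (fd u0 w))"
  note bq = between_horizonsD[OF a between[OF U(2)], folded q_def]
  have R: "kerr_rho2 a q \<noteq> 0" using bq by simp
  obtain Dn where Dn: "(barrier_grad M0 a has_derivative Dn) (at q)"
    using barrier_grad_differentiable[OF bq(1,2)] by blast
  have tangent: "barrier_diff M0 a q (fd u0 v) = 0" for v
    unfolding q_def by (rule barrier_diff_vanishes_at_max[OF U fd[OF U(2)] bq(3)[unfolded q_def] max])
  define \<alpha> where "\<alpha> = - barrier_diff M0 a q K"
  define \<beta> where "\<beta> = - barrier_diff M0 a q L"
  have \<alpha>\<beta>: "0 \<le> \<alpha>" "0 \<le> \<beta>"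
    using future_null_barrier_diff_nonpos[OF bq(1,2)] null
    unfolding \<alpha>_def \<beta>_def K_def L_def q_def by auto
  have normal: "kerr_g M0 a q L (fd u0 v) = 0" "kerr_g M0 a q K (fd u0 v) = 0" for v
    using l_normal k_normal U(2) unfolding L_def K_def q_def by auto
  have "kerr_g M0 a q L L = 0" "kerr_g M0 a q K K = 0" "kerr_g M0 a q K L = -1"
    using null unfolding future_null_def L_def K_def q_def by auto
  then have decomp: "n = \<alpha> *\<^sub>R L + \<beta> *\<^sub>R K"
    unfolding n_def \<alpha>_def \<beta>_def
    by (rule barrier_grad_normal_decomposition[OF bq(1,2) spacelike[folded q_def] tangent tangent
          normal(1) normal(1) normal(2) normal(2)])
  define H where "H = (\<lambda>v w. kerr_dg M0 a q (fd u0 v) n (fd u0 w) + kerr_g M0 a q (Dn (fd u0 v)) (fd u0 w)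
    + kerr_g M0 a q n (fdd w u0 v))"
  define BL where "BL = (\<lambda>v w. kerr_B M0 a q (fd u0 v) (fd u0 w) (Ld u0 v) L)"
  define BK where "BK = (\<lambda>v w. kerr_B M0 a q (fd u0 v) (fd u0 w) (Kd u0 v) K)"
  define Q where "Q = (\<lambda>v w. kerr_B M0 a q (fd u0 v) (fd u0 w) (Dn (fd u0 v)) n)"
  have H_eq: "H v w = - \<alpha> * BL v w - \<beta> * BK v w + Q v w" for v w
    unfolding H_def BL_def BK_def Q_def
  proof (rule second_variation_normal_decomposition[OF R _ _ decomp])
    show "kerr_dg M0 a q (fd u0 v) L (fd u0 w) + kerr_g M0 a q (Ld u0 v) (fd u0 w)
        + kerr_g M0 a q L (fdd w u0 v) = 0"
      unfolding L_def q_def by (rule orthogonality_derivative[OF U fd fdd Ld l_normal R[unfolded q_def]])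
    show "kerr_dg M0 a q (fd u0 v) K (fd u0 w) + kerr_g M0 a q (Kd u0 v) (fd u0 w)
        + kerr_g M0 a q K (fdd w u0 v) = 0"
      unfolding K_def q_def by (rule orthogonality_derivative[OF U fd fdd Kd k_normal R[unfolded q_def]])
  qed
  have "trace_numerator h H (1,0) (0,1) = - \<alpha> * trace_numerator h BL (1,0) (0,1)
      - \<beta> * trace_numerator h BK (1,0) (0,1) + trace_numerator h Q (1,0) (0,1)"
    unfolding trace_numerator_def H_eq by (simp add: algebra_simps)
  moreover have "trace_numerator h H (1,0) (0,1) \<le> 0"
    unfolding h_def H_def q_def n_def
    by (rule barrier_second_variation_trace_nonpos[OF a U fd fdd between max Dn[unfolded q_def] spacelike])
  moreover have "trace_numerator h BL (1,0) (0,1) \<le> 0" "trace_numerator h BK (1,0) (0,1) \<le> 0"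
    using expansions spacelike(2)
    unfolding expansion_eq_trace_numerator[OF fd[OF U(2)] Ld[OF U(2)]]
      expansion_eq_trace_numerator[OF fd[OF U(2)] Kd[OF U(2)]]
    by (simp_all add: h_def q_def BL_def BK_def L_def K_def gram_det_def divide_le_0_iff)
  moreover have "0 < trace_numerator h Q (1,0) (0,1)"
    using barrier_hessian_trace_pos[OF a X[folded q_def] Dn tangent tangent spacelike(2)[folded q_def]]
    unfolding h_def Q_def n_def trace_numerator_def .
  ultimately show False
    using mult_nonneg_nonpos[OF \<alpha>\<beta>(1)] mult_nonneg_nonpos[OF \<alpha>\<beta>(2)] by fastforce
qed

lemma phi_shift_iterate:
  assumes per: "\<forall>p. p \<in> S \<longleftrightarrow> phi_shift p \<in> S" and p: "p \<in> S"
  shows "p + (2*pi * of_int m) *\<^sub>R axis 4 1 \<in> S"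
proof (induction m rule: int_induct[where k=0])
  case base
  then show ?case using p by simp
next
  case (step1 i)
  have "p + (2*pi * of_int (i+1)) *\<^sub>R axis 4 1 = phi_shift (p + (2*pi * of_int i) *\<^sub>R axis 4 1)"
    by (simp add: phi_shift_def algebra_simps)
  then show ?case using per step1.IH by simp
next
  case (step2 i)
  have "phi_shift (p + (2*pi * of_int (i-1)) *\<^sub>R axis 4 1) = p + (2*pi * of_int i) *\<^sub>R axis 4 1"
    by (simp add: phi_shift_def algebra_simps)
  then show ?case using per step2.IH by metis
qed

lemma phi_periodic_representative:
  assumes "\<forall>p. p \<in> S \<longleftrightarrow> phi_shift p \<in> S" and "p \<in> S"
  obtains p' where "p' \<in> S" "p'$2 = p$2" "p'$3 = p$3" "0 \<le> p'$4" "p'$4 \<le> 2*pi"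
proof
  define m where "m = \<lfloor>p$4 / (2*pi)\<rfloor>"
  define p' where "p' = p + (2*pi * of_int (-m)) *\<^sub>R axis 4 (1::real)"
  show "p' \<in> S" unfolding p'_def by (rule phi_shift_iterate[OF assms])
  have "of_int m \<le> p$4 / (2*pi)" "p$4 / (2*pi) < of_int m + 1"
    unfolding m_def by linarith+
  then have "2*pi*m \<le> p$4" "p$4 < 2*pi*m + 2*pi"
    by (simp_all add: field_simps)
  then show "p'$2 = p$2" "p'$3 = p$3" "0 \<le> p'$4" "p'$4 \<le> 2*pi"
    by (auto simp: p'_def axis_def)
qed

lemma closed_surface_barrier_max:
  assumes a: "0 < a" "a < M0" and SX: "S \<subseteq> region_X M0 a" and S: "closed_surface M0 a S"
  obtains q where "q \<in> S" "\<And>p. p \<in> S \<Longrightarrow> barrier M0 a p \<le> barrier M0 a q"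
proof -
  define C where "C = S \<inter> {p. 0 \<le> p$4 \<and> p$4 \<le> 2*pi}"
  have per: "\<forall>p. p \<in> S \<longleftrightarrow> phi_shift p \<in> S" and "S \<noteq> {}" and "compact C"
    using S unfolding closed_surface_def C_def by auto
  have rep: "\<exists>p'\<in>C. barrier M0 a p' = barrier M0 a p" if p: "p \<in> S" for p
  proof -
    obtain p' where "p' \<in> S" "p'$2 = p$2" "p'$3 = p$3" "0 \<le> p'$4" "p'$4 \<le> 2*pi"
      using phi_periodic_representative[OF per p] by blast
    then show ?thesis unfolding C_def barrier_def by (intro bexI[of _ p']) auto
  qed
  then have "C \<noteq> {}" using \<open>S \<noteq> {}\<close> by blast
  moreover have "continuous_on C (barrier M0 a)"
  proof (intro continuous_at_imp_continuous_on ballI)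
    fix p assume "p \<in> C"
    then have "p \<in> between_horizons M0 a"
      using SX region_X_subset_between_horizons unfolding C_def by blast
    then show "isCont (barrier M0 a) p"
      by (rule has_derivative_continuous[OF barrier_has_derivative[OF between_horizonsD(3)[OF a]]])
  qed
  ultimately obtain q where "q \<in> C" and qmax: "\<forall>y\<in>C. barrier M0 a y \<le> barrier M0 a q"
    using continuous_attains_sup[OF \<open>compact C\<close>] by blast
  moreover have "barrier M0 a p \<le> barrier M0 a q" if "p \<in> S" for p
    using rep[OF that] qmax by fastforce
  ultimately show thesis using that unfolding C_def by blast
qed

lemma smooth_on_has_derivative:
  assumes "smooth_on U f"
  obtains f' where "\<And>u. u \<in> U \<Longrightarrow> (f has_derivative f' u) (at u)"
  using assms unfolding smooth_on_def by (metis Ck.simps(2))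

lemma smooth_on_second_derivative:
  assumes "smooth_on U f"
  obtains f' f'' where "\<And>u. u \<in> U \<Longrightarrow> (f has_derivative f' u) (at u)"
    and "\<And>v u. u \<in> U \<Longrightarrow> ((\<lambda>x. f' x v) has_derivative f'' v u) (at u)"
proof -
  obtain f' where f': "\<forall>u\<in>U. (f has_derivative f' u) (at u)" and "\<forall>v. Ck (Suc 0) U (\<lambda>x. f' x v)"
    using assms unfolding smooth_on_def by (metis Ck.simps(2))
  then have "\<forall>v. \<exists>D. \<forall>u\<in>U. ((\<lambda>x. f' x v) has_derivative D u) (at u)" by (simp, blast)
  then obtain f'' where "\<forall>v. \<forall>u\<in>U. ((\<lambda>x. f' x v) has_derivative f'' v u) (at u)"
    by metis
  then show thesis using f' that by blast
qed

lemma no_closed_marginally_trapped_surface: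
  assumes a: "0 < a" "a < M0" and SX: "S \<subseteq> region_X M0 a"
    and "closed_marginally_trapped_surface M0 a S"
  shows False
proof -
  obtain l k where S: "closed_surface M0 a S" and nn: "null_normal_pair M0 a S l k"
    and exp: "\<And>f U W u. surface_chart S f U W \<Longrightarrow> u \<in> U \<Longrightarrow>
      expansion M0 a l f u \<le> 0 \<and> expansion M0 a k f u \<le> 0"
    using assms(4) unfolding closed_marginally_trapped_surface_def by blast
  obtain q where "q \<in> S" and qmax: "\<And>p. p \<in> S \<Longrightarrow> barrier M0 a p \<le> barrier M0 a q"
    using closed_surface_barrier_max[OF a SX S] by blast
  then obtain f U W where chart: "surface_chart S f U W" and "q \<in> W"
    using S unfolding closed_surface_def embedded_surface_def by blast
  then have U: "open U" and "smooth_on U f" and fU: "f ` U = S \<inter> W"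
    unfolding surface_chart_def homeomorphism_def by auto
  obtain u0 where u0: "u0 \<in> U" "f u0 = q" using \<open>q \<in> S\<close> \<open>q \<in> W\<close> fU by (metis IntI imageE)
  have fX: "f u \<in> region_X M0 a" if "u \<in> U" for u using fU SX that by blast
  obtain fd fdd where fd: "\<And>u. u \<in> U \<Longrightarrow> (f has_derivative fd u) (at u)"
    and fdd: "\<And>v u. u \<in> U \<Longrightarrow> ((\<lambda>x. fd x v) has_derivative fdd v u) (at u)"
    using smooth_on_second_derivative[OF \<open>smooth_on U f\<close>] by blast
  have frechet: "frechet_derivative f (at u) = fd u" if "u \<in> U" for u
    using frechet_derivative_at[OF fd[OF that]] by simp
  have smooth: "smooth_on U (l \<circ> f)" "smooth_on U (k \<circ> f)"
    and normal: "\<And>u w. u \<in> U \<Longrightarrow> kerr_g M0 a (f u) (l (f u)) (frechet_derivative f (at u) w) = 0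
      \<and> kerr_g M0 a (f u) (k (f u)) (frechet_derivative f (at u) w) = 0"
    using nn chart unfolding null_normal_pair_def by blast+
  obtain Ld where Ld: "\<And>u. u \<in> U \<Longrightarrow> ((l \<circ> f) has_derivative Ld u) (at u)"
    using smooth_on_has_derivative[OF smooth(1)] by blast
  obtain Kd where Kd: "\<And>u. u \<in> U \<Longrightarrow> ((k \<circ> f) has_derivative Kd u) (at u)"
    using smooth_on_has_derivative[OF smooth(2)] by blast
  have "0 < kerr_g M0 a (f u0) (fd u0 (1,0)) (fd u0 (1,0))
    \<and> 0 < gram_det (kerr_g M0 a (f u0)) (fd u0 (1,0)) (fd u0 (0,1))"
    using spacelike_surface_chart_gram[OF _ chart u0(1) fd[OF u0(1)]] S
    unfolding closed_surface_def by blast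
  moreover have "future_null M0 a (f u0) (l (f u0))" "future_null M0 a (f u0) (k (f u0))"
    "kerr_g M0 a (f u0) (k (f u0)) (l (f u0)) = -1"
    using nn \<open>q \<in> S\<close> u0(2) unfolding null_normal_pair_def by blast+
  moreover have "expansion M0 a l f u0 \<le> 0" "expansion M0 a k f u0 \<le> 0"
    using exp[OF chart u0(1)] by auto
  ultimately show False
  proof (elim conjE, intro no_marginally_trapped_chart_at_barrier_max[OF a U u0(1) fd fdd _ _ _ Ld Kd])
    show "f u \<in> between_horizons M0 a" if "u \<in> U" for u
      using fX[OF that] region_X_subset_between_horizons by blast
    show "f u0 \<in> region_X M0 a" by (rule fX[OF u0(1)])
    show "barrier M0 a (f u) \<le> barrier M0 a (f u0)" if "u \<in> U" for u
      using qmax fU that u0(2) by blast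
    show "kerr_g M0 a (f u) (l (f u)) (fd u w) = 0" "kerr_g M0 a (f u) (k (f u)) (fd u w) = 0"
      if "u \<in> U" for u w
      using normal[OF that, of w] frechet[OF that] by simp_all
  qed
qed

theorem mainTheorem13:
  fixes M0 a :: real
  assumes "0 < a" and "a < M0"
  shows "\<not> (\<exists>S. S \<subseteq> region_X M0 a \<and> closed_trapped_surface M0 a S)
         \<and> \<not> (\<exists>S. S \<subseteq> region_X M0 a \<and> closed_marginally_trapped_surface M0 a S)"
proof -
  have "closed_marginally_trapped_surface M0 a S" if "closed_trapped_surface M0 a S" for S
    using that unfolding closed_trapped_surface_def closed_marginally_trapped_surface_def
    by (meson less_imp_le)
  then show ?thesis using no_closed_marginally_trapped_surface[OF assms] by blast
qed

end
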